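(* Suppose $(\Omega,\mathcal{F},\mathsf{P})$ is atomless and $u$ is a law invariant coherent utility on $L^0$ with determining set $\mathcal{D}$. Then for any random variable $X$ and any random vectors $Y,Y'$, $$u^f(X;Y,Y')\le u^f(X;Y),$$ where $u^f(X;Y,Y')$ denotes the factor utility with respect to the compound random vector $(Y,Y')$.
   Context: Let $(\Omega,\mathcal{F},\mathsf{P})$ be a probability space, $L^0$ the space of all real random variables, and $\mathcal{P}$ the set of probability measures on $\mathcal{F}$ absolutely continuous with respect to $\mathsf{P}$; measures $\mathsf{Q}\in\mathcal{P}$ are identified with their densities. For $\mathsf{Q}\in\mathcal{P}$ and $X\in L^0$, $\mathsf{E}_\mathsf{Q}X:=\mathsf{E}_\mathsf{Q}X^+-\mathsf{E}_\mathsf{Q}X^-$ with the convention $\infty-\infty=-\infty$. A coherent utility on $L^0$ is a map $u:L^0\to[-\infty,\infty]$ of the form $u(X)=\inf_{\mathsf{Q}\in\mathcal{D}}\mathsf{E}_\mathsf{Q}X$ for a nonempty $\mathcal{D}\subseteq\mathcal{P}$; its determining set is the largest such set, $\{\mathsf{Q}\in\mathcal{P}:\mathsf{E}_\mathsf{Q}X\ge u(X)\ \forall X\in L^0\}$. $u$ is law invariant if $u(X)=u(X')$ whenever $X,X'$ have the same distribution. For a random vector $Y$, $\mathsf{E}(\mathcal{D}\mid Y):=\{\mathsf{E}(Z\mid Y):Z\in\mathcal{D}\}$ and the factor utility is $u^f(X;Y):=\inf_{\mathsf{Q}\in\mathsf{E}(\mathcal{D}\mid Y)}\mathsf{E}_\mathsf{Q}X$.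 *)

theory Defs
  imports "HOL-Probability.Probability"
begin

definition atomless :: "'a measure \<Rightarrow> bool" where
  "atomless M \<longleftrightarrow> (\<forall>A\<in>sets M. 0 < measure M A \<longrightarrow>
     (\<exists>B\<in>sets M. B \<subseteq> A \<and> 0 < measure M B \<and> measure M B < measure M A))"

definition densities :: "'a measure \<Rightarrow> ('a \<Rightarrow> real) set" where
  "densities M = {Z. Z \<in> borel_measurable M \<and> (AE \<omega> in M. 0 \<le> Z \<omega>)
                     \<and> integrable M Z \<and> integral\<^sup>L M Z = 1}"

text \<open>E_Q X = E_Q X^+ - E_Q X^-, with the convention infinity - infinity = -infinity.\<close>
definition EQ :: "'a measure \<Rightarrow> ('a \<Rightarrow> real) \<Rightarrow> ('a \<Rightarrow> real) \<Rightarrow> ereal" where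
  "EQ M Z X =
     (let p = enn2ereal (\<integral>\<^sup>+ \<omega>. ennreal (Z \<omega> * max (X \<omega>) 0) \<partial>M);
          n = enn2ereal (\<integral>\<^sup>+ \<omega>. ennreal (Z \<omega> * max (- X \<omega>) 0) \<partial>M)
      in if n = \<infinity> then - \<infinity> else p - n)"

definition coherent_utility :: "'a measure \<Rightarrow> (('a \<Rightarrow> real) \<Rightarrow> ereal) \<Rightarrow> bool" where
  "coherent_utility M u \<longleftrightarrow> (\<exists>D0. D0 \<noteq> {} \<and> D0 \<subseteq> densities M \<and>
     (\<forall>X\<in>borel_measurable M. u X = (INF Z\<in>D0. EQ M Z X)))"

definition determining_set :: "'a measure \<Rightarrow> (('a \<Rightarrow> real) \<Rightarrow> ereal) \<Rightarrow> ('a \<Rightarrow> real) set" where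
  "determining_set M u = {Z\<in>densities M. \<forall>X\<in>borel_measurable M. EQ M Z X \<ge> u X}"

definition law_invariant :: "'a measure \<Rightarrow> (('a \<Rightarrow> real) \<Rightarrow> ereal) \<Rightarrow> bool" where
  "law_invariant M u \<longleftrightarrow> (\<forall>X\<in>borel_measurable M. \<forall>X'\<in>borel_measurable M.
     distr M borel X = distr M borel X' \<longrightarrow> u X = u X')"

definition gen_sigma :: "'a measure \<Rightarrow> ('a \<Rightarrow> 'b::topological_space) \<Rightarrow> 'a measure" where
  "gen_sigma M Y = vimage_algebra (space M) Y borel"

definition factor_utility :: "'a measure \<Rightarrow> ('a \<Rightarrow> real) set \<Rightarrow> ('a \<Rightarrow> real)
    \<Rightarrow> ('a \<Rightarrow> 'b::topological_space) \<Rightarrow> ereal" where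
  "factor_utility M D X Y = (INF Q\<in>(\<lambda>Z. real_cond_exp M (gen_sigma M Y) Z) ` D. EQ M Q X)"

end

theory Submission
  imports Defs
begin

(* Let Z be in the determining set D and W = E(Z | Y). W is sigma(Y)-measurable, hence
   sigma(Y, Y')-measurable, so W = E(W | Y, Y'). Once W is known to lie in D again, every density
   of E(D | Y) is (up to null sets) one of E(D | Y, Y'), and the infimum over the larger family
   is smaller.

   That W lies in D is the heart of the matter. Cut the space into the sigma(Y)-measurable bands
   b^m <= W < b^(m+1) and average Z over each band; since W and Z have the same integral over
   every band, the averaged density Z_b satisfies W <= b Z_b and Z_b <= b W. On an atomless
   space any X can be rearranged inside every band, by the quantile transform of a variable that
   is uniform on the band both under P and under Z P, into X' with the law of X and
   E[Z X'] = E[Z_b X]. Law invariance gives u X = u X' <= E[Z X'] = E[Z_b X], and letting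
   b -> 1 yields u X <= E[W X]. *)

section \<open>Atomless probability spaces\<close>

lemma ex_divide_power2_less:
  fixes a e :: real
  assumes "0 < e"
  shows "\<exists>n. a / 2^n < e"
proof -
  obtain n :: nat where "a / e < 2^n" using real_arch_pow[of 2 "a / e"] by auto
  then have "a / 2^n < e" using assms by (simp add: field_simps)
  then show ?thesis ..
qed

lemma atomless_small_subset:
  assumes "prob_space M" and "atomless M" and A: "A \<in> sets M" "0 < measure M A" and "0 < e"
  shows "\<exists>B\<in>sets M. B \<subseteq> A \<and> 0 < measure M B \<and> measure M B < e"
proof -
  interpret prob_space M by fact
  have halving: "\<exists>B\<in>sets M. B \<subseteq> A \<and> 0 < measure M B \<and> measure M B \<le> measure M A / 2^n" for n
  proof (induction n)
    case 0
    then show ?case using A by auto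
  next
    case (Suc n)
    then obtain B where B: "B \<in> sets M" "B \<subseteq> A" "0 < measure M B" "measure M B \<le> measure M A / 2^n"
      by blast
    then obtain C where C: "C \<in> sets M" "C \<subseteq> B" "0 < measure M C" "measure M C < measure M B"
      using \<open>atomless M\<close> by (auto simp: atomless_def)
    have diff: "measure M (B - C) = measure M B - measure M C"
      using B C by (simp add: finite_measure_Diff)
    show ?case
    proof (cases "measure M C \<le> measure M B / 2")
      case True
      then show ?thesis using B C by (intro bexI[of _ C]) auto
    next
      case False
      then show ?thesis using B C diff by (intro bexI[of _ "B - C"]) auto
    qed
  qed
  obtain n where "measure M A / 2^n < e" using ex_divide_power2_less[OF \<open>0 < e\<close>] by blast
  moreover obtain B where "B \<in> sets M" "B \<subseteq> A" "0 < measure M B" "measure M B \<le> measure M A / 2^n"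
    using halving[of n] by blast
  ultimately show ?thesis by (intro bexI[of _ B]) auto
qed

lemma ex_ge_half_SUP:
  fixes f :: "'a \<Rightarrow> real"
  assumes "x \<in> S" and "f x = 0" and bdd: "bdd_above (f ` S)"
  shows "\<exists>y\<in>S. (SUP z\<in>S. f z) / 2 \<le> f y"
proof -
  have "0 \<le> (SUP z\<in>S. f z)" using cSUP_upper[OF assms(1) bdd] assms(2) by simp
  then consider "(SUP z\<in>S. f z) = 0" | "(SUP z\<in>S. f z) / 2 < (SUP z\<in>S. f z)" by fastforce
  then show ?thesis
  proof cases
    case 1
    then show ?thesis using assms(1,2) by (intro bexI[of _ x]) auto
  next
    case 2
    then obtain y where "y \<in> S" "(SUP z\<in>S. f z) / 2 < f y"
      using less_cSUP_iff[OF _ bdd] assms(1) by blast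
    then show ?thesis by (auto intro: less_imp_le)
  qed
qed

text \<open>Sierpinski's theorem, by greedy exhaustion: each step adds a set of at least half
  the largest admissible measure, so the increments tend to zero and no admissible set of
  positive measure can remain.\<close>

lemma atomless_subset_measure_eq:
  assumes P: "prob_space M" and atl: "atomless M" and A: "A \<in> sets M"
    and t: "0 \<le> t" "t \<le> measure M A"
  shows "\<exists>C\<in>sets M. C \<subseteq> A \<and> measure M C = t"
proof -
  interpret prob_space M by fact
  define adm where "adm C = {E\<in>sets M. E \<subseteq> A - C \<and> measure M C + measure M E \<le> t}" for C
  define gap where "gap C = (SUP E\<in>adm C. measure M E)" for C
  have bdd: "bdd_above (measure M ` adm C)" for C
    by (rule bdd_aboveI[of _ 1]) auto
  have "\<exists>E\<in>adm C. gap C / 2 \<le> measure M E" if "measure M C \<le> t" for C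
    unfolding gap_def using that by (intro ex_ge_half_SUP[OF _ _ bdd, of "{}"]) (auto simp: adm_def)
  then obtain step where step: "\<And>C. measure M C \<le> t \<Longrightarrow> step C \<in> adm C \<and> gap C / 2 \<le> measure M (step C)"
    by metis
  define C where "C n = ((\<lambda>C. C \<union> step C) ^^ n) {}" for n
  have C_Suc: "C (Suc n) = C n \<union> step (C n)" for n by (simp add: C_def)
  have C: "C n \<in> sets M \<and> C n \<subseteq> A \<and> measure M (C n) \<le> t" for n
  proof (induction n)
    case 0
    then show ?case using t by (simp add: C_def)
  next
    case (Suc n)
    then have E: "step (C n) \<in> sets M" "step (C n) \<subseteq> A - C n"
      "measure M (C n) + measure M (step (C n)) \<le> t"
      using step[of "C n"] by (auto simp: adm_def)
    then have "measure M (C (Suc n)) = measure M (C n) + measure M (step (C n))"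
      unfolding C_Suc using Suc by (intro finite_measure_Union) auto
    then show ?case using Suc E by (auto simp: C_Suc)
  qed
  have C_Suc_measure: "measure M (C (Suc n)) = measure M (C n) + measure M (step (C n))" for n
    using C[of n] step[of "C n"] unfolding C_Suc adm_def by (intro finite_measure_Union) auto
  define U where "U = (\<Union>n. C n)"
  have U: "U \<in> sets M" "U \<subseteq> A" using C by (auto simp: U_def)
  have "incseq C" by (rule incseq_SucI) (simp add: C_Suc)
  then have lim: "(\<lambda>n. measure M (C n)) \<longlonglongrightarrow> measure M U"
    unfolding U_def using C by (intro finite_Lim_measure_incseq) auto
  have "measure M U \<le> t" using C by (intro LIMSEQ_le_const2[OF lim]) auto
  moreover have "\<not> measure M U < t"
  proof
    assume lt: "measure M U < t"
    have "0 < measure M (A - U)" using U A lt t by (simp add: finite_measure_Diff)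
    then obtain F where F: "F \<in> sets M" "F \<subseteq> A - U" "0 < measure M F" "measure M F < t - measure M U"
      using atomless_small_subset[OF P atl _ _, of "A - U" "t - measure M U"] U A lt by auto
    have C_le_U: "measure M (C n) \<le> measure M U" for n
      using C U by (intro finite_measure_mono) (auto simp: U_def)
    have "F \<in> adm (C n)" for n using F C_le_U[of n] by (auto simp: adm_def U_def)
    then have "measure M F \<le> gap (C n)" for n unfolding gap_def by (rule cSUP_upper[OF _ bdd])
    moreover have "gap (C n) / 2 \<le> measure M (step (C n))" for n using step C by blast
    ultimately have half_step: "measure M F / 2 \<le> measure M (step (C n))" for n
      by (smt (verit, best) field_sum_of_halves)
    have growth: "real n * (measure M F / 2) \<le> measure M (C n)" for n
    proof (induction n)
      case 0
      then show ?case by (simp add: C_def)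
    next
      case (Suc n)
      then show ?case using C_Suc_measure[of n] half_step[of n] by (simp add: algebra_simps)
    qed
    obtain n where "t / (measure M F / 2) < real n" using reals_Archimedean2 by blast
    then show False using F C[of n] growth[of n] by (simp add: field_simps)
  qed
  ultimately show ?thesis using U by (intro bexI[of _ U]) auto
qed

lemma ex_measurable_subset_choice:
  assumes "\<And>B. B \<in> sets M \<Longrightarrow> \<exists>C\<in>sets M. C \<subseteq> B \<and> R B C"
  shows "\<exists>s. (\<forall>B. s B \<subseteq> B) \<and> (\<forall>B\<in>sets M. s B \<in> sets M \<and> R B (s B))"
proof -
  define s where "s B = (if B \<in> sets M then SOME C. C \<in> sets M \<and> C \<subseteq> B \<and> R B C else {})" for B
  have *: "s B \<in> sets M \<and> s B \<subseteq> B \<and> R B (s B)" if "B \<in> sets M" for B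
    unfolding s_def using someI_ex[OF assms[OF that, unfolded Bex_def]] that by simp
  moreover have "s B \<subseteq> B" for B using * by (cases "B \<in> sets M") (auto simp: s_def)
  ultimately show ?thesis by (intro exI[of _ s]) simp
qed

lemma sets_Collect_in:
  assumes "A \<in> sets M" and "Measurable.pred M P"
  shows "{x\<in>A. P x} \<in> sets M"
proof -
  have "A \<inter> {x\<in>space M. P x} \<in> sets M" using assms by auto
  also have "A \<inter> {x\<in>space M. P x} = {x\<in>A. P x}" using sets.sets_into_space[OF assms(1)] by auto
  finally show ?thesis .
qed

section \<open>Dyadic splitting and uniform random variables\<close>

text \<open>If \<open>s\<close> halves a measure, the limit of the left end points \<open>k / 2^n\<close> of the cells
  containing \<open>x\<close> is a uniformly distributed variable on \<open>A\<close>.\<close>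

fun dyadic_cell :: "('a set \<Rightarrow> 'a set) \<Rightarrow> 'a set \<Rightarrow> nat \<Rightarrow> nat \<Rightarrow> 'a set" where
  "dyadic_cell s A 0 k = (if k = 0 then A else {})"
| "dyadic_cell s A (Suc n) k =
    (if even k then s (dyadic_cell s A n (k div 2))
     else dyadic_cell s A n (k div 2) - s (dyadic_cell s A n (k div 2)))"

definition dyadic_level :: "('a set \<Rightarrow> 'a set) \<Rightarrow> 'a set \<Rightarrow> nat \<Rightarrow> 'a \<Rightarrow> real" where
  "dyadic_level s A n x = (\<Sum>k<2^n. real k / 2^n * indicator (dyadic_cell s A n k) x)"

definition dyadic_value :: "('a set \<Rightarrow> 'a set) \<Rightarrow> 'a set \<Rightarrow> 'a \<Rightarrow> real" where
  "dyadic_value s A x = (SUP n. dyadic_level s A n x)"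

locale dyadic_splitting =
  fixes M :: "'a measure" and s :: "'a set \<Rightarrow> 'a set" and A :: "'a set"
  assumes split_sets: "\<And>B. B \<in> sets M \<Longrightarrow> s B \<in> sets M"
    and split_subset: "\<And>B. s B \<subseteq> B"
    and A_sets: "A \<in> sets M"
begin

lemma cell_sets: "dyadic_cell s A n k \<in> sets M"
  by (induction n arbitrary: k) (auto simp: A_sets split_sets)

lemma cell_subset_parent: "dyadic_cell s A (Suc n) k \<subseteq> dyadic_cell s A n (k div 2)"
  using split_subset by auto

lemma cell_subset: "dyadic_cell s A n k \<subseteq> A"
proof (induction n arbitrary: k)
  case 0 then show ?case by auto
next
  case (Suc n) then show ?case using cell_subset_parent[of n k] by blast
qed

lemma cell_cover: "x \<in> A \<Longrightarrow> \<exists>k<2^n. x \<in> dyadic_cell s A n k"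
proof (induction n)
  case 0 then show ?case by auto
next
  case (Suc n)
  then obtain k where k: "k < 2^n" "x \<in> dyadic_cell s A n k" by auto
  show ?case
  proof (cases "x \<in> s (dyadic_cell s A n k)")
    case True
    then have "x \<in> dyadic_cell s A (Suc n) (2*k)" by simp
    then show ?thesis using k by (intro exI[of _ "2*k"]) auto
  next
    case False
    then have "x \<in> dyadic_cell s A (Suc n) (2*k+1)" using k by simp
    then show ?thesis using k by (intro exI[of _ "2*k+1"]) auto
  qed
qed

lemma cell_unique: "x \<in> dyadic_cell s A n j \<Longrightarrow> x \<in> dyadic_cell s A n k \<Longrightarrow> j = k"
proof (induction n arbitrary: j k)
  case 0 then show ?case by (auto split: if_splits)
next
  case (Suc n)
  have jk: "j div 2 = k div 2" using Suc cell_subset_parent by blast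
  have "even j = even k" using Suc.prems jk by (auto split: if_splits)
  with jk show ?case by (metis dvd_mult_div_cancel odd_two_times_div_two_succ)
qed

definition cell_index :: "nat \<Rightarrow> 'a \<Rightarrow> nat" where "cell_index n x = (THE k. x \<in> dyadic_cell s A n k)"

lemma cell_index_mem: "x \<in> A \<Longrightarrow> x \<in> dyadic_cell s A n (cell_index n x) \<and> cell_index n x < 2^n"
proof -
  assume x: "x \<in> A"
  obtain k where k: "k < 2^n" "x \<in> dyadic_cell s A n k" using cell_cover[OF x] by auto
  have "cell_index n x = k" unfolding cell_index_def using k cell_unique by blast
  then show ?thesis using k by simp
qed

lemma cell_index_eq: "x \<in> dyadic_cell s A n k \<Longrightarrow> cell_index n x = k"
  using cell_index_mem cell_unique cell_subset by blast

lemma cell_index_Suc: "x \<in> A \<Longrightarrow> cell_index (Suc n) x div 2 = cell_index n x"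
proof -
  assume x: "x \<in> A"
  have "x \<in> dyadic_cell s A n (cell_index (Suc n) x div 2)" using cell_index_mem[OF x, of "Suc n"] cell_subset_parent by blast
  then show ?thesis using cell_index_eq by metis
qed

lemma cell_index_div: "x \<in> A \<Longrightarrow> n \<le> m \<Longrightarrow> cell_index m x div 2^(m-n) = cell_index n x"
proof (induction m)
  case 0 then show ?case by simp
next
  case (Suc m)
  show ?case
  proof (cases "n = Suc m")
    case True then show ?thesis by simp
  next
    case False
    then have "n \<le> m" using Suc by simp
    then have "cell_index m x div 2^(m-n) = cell_index n x" using Suc by simp
    moreover have "Suc m - n = Suc (m - n)" using \<open>n \<le> m\<close> by simp
    ultimately show ?thesis using cell_index_Suc[OF Suc.prems(1), of m]
      by (metis div_mult2_eq power_Suc)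
  qed
qed

lemma level_eq_index: "x \<in> A \<Longrightarrow> dyadic_level s A n x = real (cell_index n x) / 2^n"
proof -
  assume x: "x \<in> A"
  have "dyadic_level s A n x = (\<Sum>k\<in>{cell_index n x}. real k / 2^n * indicator (dyadic_cell s A n k) x)"
    unfolding dyadic_level_def using cell_index_mem[OF x] cell_index_eq
    by (intro sum.mono_neutral_right) (auto simp: indicator_def)
  then show ?thesis using cell_index_mem[OF x] by simp
qed

lemma level_outside: "x \<notin> A \<Longrightarrow> dyadic_level s A n x = 0"
proof -
  assume x: "x \<notin> A"
  then have "x \<notin> dyadic_cell s A n k" for k using cell_subset by blast
  then show ?thesis unfolding dyadic_level_def by simp
qed

lemma borel_measurable_level: "dyadic_level s A n \<in> borel_measurable M"
  unfolding dyadic_level_def using cell_sets by measurable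

lemma level_le_Suc: "dyadic_level s A n x \<le> dyadic_level s A (Suc n) x"
proof (cases "x \<in> A")
  case True
  have "2 * cell_index n x \<le> cell_index (Suc n) x" using cell_index_Suc[OF True, of n] by linarith
  then have "real (2 * cell_index n x) \<le> real (cell_index (Suc n) x)" by linarith
  then show ?thesis using True by (simp add: level_eq_index field_simps)
next
  case False then show ?thesis by (simp add: level_outside)
qed

lemma incseq_level: "incseq (\<lambda>n. dyadic_level s A n x)"
  by (rule incseq_SucI) (rule level_le_Suc)

lemma level_nonneg: "0 \<le> dyadic_level s A n x"
  by (cases "x \<in> A") (auto simp: level_eq_index level_outside)

lemma level_less: "dyadic_level s A m x < dyadic_level s A n x + 1 / 2^n"
proof (cases "x \<in> A")
  case x: True
  show ?thesis
  proof (cases "n \<le> m")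
    case True
    have "cell_index m x div 2^(m-n) < cell_index n x + 1" using cell_index_div[OF x True] by simp
    then have "cell_index m x < (cell_index n x + 1) * 2^(m-n)" by (simp add: div_less_iff_less_mult)
    then have "real (cell_index m x) < real ((cell_index n x + 1) * 2^(m-n))" by (simp only: of_nat_less_iff)
    then have "real (cell_index m x) < (real (cell_index n x) + 1) * 2^(m-n)" by (simp add: algebra_simps)
    then have "real (cell_index m x) / 2^m < (real (cell_index n x) + 1) * 2^(m-n) / 2^m"
      by (simp add: divide_strict_right_mono)
    also have "(real (cell_index n x) + 1) * 2^(m-n) / 2^m = (real (cell_index n x) + 1) / 2^n"
      using True by (simp add: power_diff field_simps)
    finally show ?thesis using x by (simp add: level_eq_index add_divide_distrib)
  next
    case False
    then have "dyadic_level s A m x \<le> dyadic_level s A n x" using incseq_level[of x] by (simp add: incseq_def)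
    moreover have "0 < 1 / (2::real)^n" by simp
    ultimately show ?thesis by linarith
  qed
next
  case False then show ?thesis by (simp add: level_outside)
qed

lemma level_less_1: "dyadic_level s A n x < 1"
  using level_less[of n x 0] level_nonneg[of 0 x] by (simp add: dyadic_level_def)

lemma bdd_above_level: "bdd_above (range (\<lambda>n. dyadic_level s A n x))"
  by (rule bdd_aboveI[of _ 1]) (use level_less_1 less_imp_le in auto)

lemma level_LIMSEQ_value: "(\<lambda>n. dyadic_level s A n x) \<longlonglongrightarrow> dyadic_value s A x"
  unfolding dyadic_value_def by (rule LIMSEQ_incseq_SUP[OF bdd_above_level incseq_level])

lemma level_le_value: "dyadic_level s A n x \<le> dyadic_value s A x"
  unfolding dyadic_value_def by (rule cSUP_upper[OF _ bdd_above_level]) auto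

lemma value_le_level: "dyadic_value s A x \<le> dyadic_level s A n x + 1 / 2^n"
  unfolding dyadic_value_def by (rule cSUP_least) (auto intro: less_imp_le level_less)

lemma level_0: "dyadic_level s A 0 x = 0" by (simp add: dyadic_level_def)

lemma value_bounds: "0 \<le> dyadic_value s A x" "dyadic_value s A x \<le> 1"
  using level_le_value[of 0 x] level_nonneg[of 0 x] value_le_level[of x 0] level_0[of x] by auto

lemma borel_measurable_value: "dyadic_value s A \<in> borel_measurable M"
  by (rule borel_measurable_LIMSEQ_real[OF level_LIMSEQ_value borel_measurable_level])

lemma value_dyadic_sets:
  assumes "k \<le> 2^n"
  shows "{x\<in>A. dyadic_value s A x < real k / 2^n} \<subseteq> (\<Union>j\<in>{..<k}. dyadic_cell s A n j)"
    and "(\<Union>j\<in>{..<k}. dyadic_cell s A n j) \<subseteq> {x\<in>A. dyadic_value s A x \<le> real k / 2^n}"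
proof -
  show "{x\<in>A. dyadic_value s A x < real k / 2^n} \<subseteq> (\<Union>j\<in>{..<k}. dyadic_cell s A n j)"
  proof
    fix x assume x: "x \<in> {x\<in>A. dyadic_value s A x < real k / 2^n}"
    then have "dyadic_level s A n x < real k / 2^n" using level_le_value[of n x] by auto
    then have "real (cell_index n x) < real k" using x by (simp add: level_eq_index divide_strict_right_mono_neg field_simps)
    then show "x \<in> (\<Union>j\<in>{..<k}. dyadic_cell s A n j)" using cell_index_mem[of x n] x by auto
  qed
  show "(\<Union>j\<in>{..<k}. dyadic_cell s A n j) \<subseteq> {x\<in>A. dyadic_value s A x \<le> real k / 2^n}"
  proof
    fix x assume "x \<in> (\<Union>j\<in>{..<k}. dyadic_cell s A n j)"
    then obtain j where j: "j < k" "x \<in> dyadic_cell s A n j" by auto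
    then have x: "x \<in> A" using cell_subset by blast
    have "cell_index n x = j" using cell_index_eq j by blast
    then have "dyadic_level s A n x + 1 / 2^n = (real j + 1) / 2^n" using x by (simp add: level_eq_index add_divide_distrib)
    also have "\<dots> \<le> real k / 2^n" using j by (simp add: divide_right_mono)
    finally show "x \<in> {x\<in>A. dyadic_value s A x \<le> real k / 2^n}" using x value_le_level[of x n] by auto
  qed
qed

lemma value_pred_sets: "{x\<in>A. P (dyadic_value s A x)} \<in> sets M" if "Measurable.pred borel P"
  by (intro sets_Collect_in A_sets measurable_compose[OF borel_measurable_value that])

end

locale dyadic_halving = dyadic_splitting +
  fixes N :: "'a measure"
  assumes finite_N: "finite_measure N" and sets_N: "sets N = sets M"
    and halves: "\<And>B. B \<in> sets M \<Longrightarrow> measure N (s B) = measure N B / 2"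
begin

interpretation N: finite_measure N by (rule finite_N)

lemma cell_measure: "k < 2^n \<Longrightarrow> measure N (dyadic_cell s A n k) = measure N A / 2^n"
proof (induction n arbitrary: k)
  case 0 then show ?case by simp
next
  case (Suc n)
  have kk: "k div 2 < 2^n" using Suc.prems by (simp add: less_mult_imp_div_less)
  let ?B = "dyadic_cell s A n (k div 2)"
  have B: "?B \<in> sets M" by (rule cell_sets)
  have h: "measure N (s ?B) = measure N ?B / 2" using halves[OF B] .
  show ?case
  proof (cases "even k")
    case True then show ?thesis using h Suc.IH[OF kk] by simp
  next
    case False
    have "measure N (?B - s ?B) = measure N ?B - measure N (s ?B)"
      using B split_sets[OF B] split_subset sets_N by (intro N.finite_measure_Diff) auto
    then show ?thesis using False h Suc.IH[OF kk] by simp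
  qed
qed

lemma cells_below_measure:
  assumes "k \<le> 2^n"
  shows "measure N (\<Union>j\<in>{..<k}. dyadic_cell s A n j) = real k / 2^n * measure N A"
proof -
  have "measure N (\<Union>j\<in>{..<k}. dyadic_cell s A n j) = (\<Sum>j\<in>{..<k}. measure N (dyadic_cell s A n j))"
    using cell_sets sets_N cell_unique
    by (intro N.finite_measure_finite_Union) (auto simp: disjoint_family_on_def)
  also have "\<dots> = (\<Sum>j\<in>{..<k}. measure N A / 2^n)"
    using assms by (intro sum.cong) (auto simp: cell_measure)
  finally show ?thesis by simp
qed

end

definition uniform_on :: "'a measure \<Rightarrow> 'a set \<Rightarrow> ('a \<Rightarrow> real) \<Rightarrow> bool" where
  "uniform_on N A V \<longleftrightarrow> (\<forall>t. 0 \<le> t \<longrightarrow> t \<le> 1 \<longrightarrow> measure N {x\<in>A. V x \<le> t} = t * measure N A)"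

lemma le_of_le_plus_divide_power2:
  fixes a b c :: real
  assumes "\<And>n. a \<le> b + c / 2^n"
  shows "a \<le> b"
proof (rule field_le_epsilon)
  fix e :: real assume "0 < e"
  then obtain n where "c / 2^n < e" using ex_divide_power2_less by blast
  then show "a \<le> b + e" using assms[of n] by linarith
qed

context dyadic_halving
begin

interpretation N: finite_measure N by (rule finite_N)

lemma value_le_measure_upper:
  assumes "0 \<le> t"
  shows "measure N {x\<in>A. dyadic_value s A x \<le> t} \<le> t * measure N A + measure N A / 2^n"
proof -
  define k where "k = nat (floor (t * 2^n)) + 1"
  have "real (nat \<lfloor>t * 2^n\<rfloor>) = of_int \<lfloor>t * 2^n\<rfloor>" using assms by simp
  then have "t * 2^n < real k" "real k \<le> t * 2^n + 1" unfolding k_def by linarith+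
  then have k_gt: "t < real k / 2^n" and k_le: "real k / 2^n \<le> t + 1 / 2^n"
    by (simp_all add: field_simps)
  have "measure N {x\<in>A. dyadic_value s A x \<le> t} \<le> (t + 1 / 2^n) * measure N A"
  proof (cases "k \<le> 2^n")
    case True
    have "measure N {x\<in>A. dyadic_value s A x \<le> t} \<le> measure N {x\<in>A. dyadic_value s A x < real k / 2^n}"
      using k_gt value_pred_sets[of "\<lambda>v. v < real k / 2^n"] sets_N by (intro N.finite_measure_mono) auto
    also have "\<dots> \<le> measure N (\<Union>j\<in>{..<k}. dyadic_cell s A n j)"
      using value_dyadic_sets(1)[OF True] cell_sets sets_N by (intro N.finite_measure_mono) auto
    also have "\<dots> = real k / 2^n * measure N A" using cells_below_measure[OF True] .
    also have "\<dots> \<le> (t + 1 / 2^n) * measure N A" using k_le by (intro mult_right_mono) auto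
    finally show ?thesis .
  next
    case False
    then have "real (2^n) < real k" by linarith
    then have "1 < real k / 2^n" by (simp add: field_simps)
    then have "1 \<le> t + 1 / 2^n" using k_le by linarith
    have "measure N {x\<in>A. dyadic_value s A x \<le> t} \<le> measure N A"
      using A_sets sets_N by (intro N.finite_measure_mono) auto
    also have "\<dots> \<le> (t + 1 / 2^n) * measure N A"
      using \<open>1 \<le> t + 1 / 2^n\<close> by (simp add: mult_le_cancel_right1)
    finally show ?thesis .
  qed
  then show ?thesis by (simp add: field_simps)
qed

lemma value_le_measure_lower:
  assumes "0 \<le> t" "t \<le> 1"
  shows "t * measure N A \<le> measure N {x\<in>A. dyadic_value s A x \<le> t} + measure N A / 2^n"
proof -
  define k where "k = nat (floor (t * 2^n))"
  have k_le: "real k / 2^n \<le> t" unfolding k_def using assms by (simp add: field_simps)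
  have "t * 2^n - 1 \<le> real k" unfolding k_def using assms by linarith
  then have "(t * 2^n - 1) / 2^n \<le> real k / 2^n" by (simp add: divide_right_mono)
  then have k_ge: "t - 1 / 2^n \<le> real k / 2^n" by (simp add: diff_divide_distrib)
  have "real k \<le> t * 2^n" using k_le by (simp add: field_simps)
  also have "t * 2^n \<le> 2^n" using assms by (intro mult_left_le_one_le) auto
  finally have k: "k \<le> 2^n" by (metis of_nat_le_iff of_nat_numeral of_nat_power)
  have "(t - 1 / 2^n) * measure N A \<le> real k / 2^n * measure N A"
    using k_ge by (intro mult_right_mono) auto
  also have "\<dots> = measure N (\<Union>j\<in>{..<k}. dyadic_cell s A n j)" using cells_below_measure[OF k] ..
  also have "\<dots> \<le> measure N {x\<in>A. dyadic_value s A x \<le> real k / 2^n}"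
    using value_dyadic_sets(2)[OF k] value_pred_sets[of "\<lambda>v. v \<le> real k / 2^n"] sets_N
    by (intro N.finite_measure_mono) auto
  also have "\<dots> \<le> measure N {x\<in>A. dyadic_value s A x \<le> t}"
    using k_le value_pred_sets[of "\<lambda>v. v \<le> t"] sets_N by (intro N.finite_measure_mono) auto
  finally show ?thesis by (simp add: field_simps)
qed

lemma uniform_on_value: "uniform_on N A (dyadic_value s A)"
  unfolding uniform_on_def
proof (intro allI impI antisym)
  fix t :: real assume t: "0 \<le> t" "t \<le> 1"
  show "measure N {x\<in>A. dyadic_value s A x \<le> t} \<le> t * measure N A"
    using value_le_measure_upper[OF t(1)] by (rule le_of_le_plus_divide_power2)
  show "t * measure N A \<le> measure N {x\<in>A. dyadic_value s A x \<le> t}"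
    using value_le_measure_lower[OF t] by (rule le_of_le_plus_divide_power2)
qed

end

lemma uniform_on_level_null:
  assumes "finite_measure N" and uniform: "uniform_on N A V"
    and A: "A \<in> sets N" and V: "V \<in> borel_measurable N"
  shows "measure N {x\<in>A. V x = t} = 0"
proof -
  interpret finite_measure N by fact
  have sets: "{x\<in>A. P (V x)} \<in> sets N" if "Measurable.pred borel P" for P
    by (intro sets_Collect_in A measurable_compose[OF V that])
  have level_le: "measure N {x\<in>A. V x = t} \<le> measure N {x\<in>A. V x \<le> t} - measure N {x\<in>A. V x \<le> r}"
    if "r < t" for r
  proof -
    have "measure N {x\<in>A. V x = t} \<le> measure N ({x\<in>A. V x \<le> t} - {x\<in>A. V x \<le> r})"
      using that sets[of "\<lambda>v. v = t"] sets[of "\<lambda>v. v \<le> t"] sets[of "\<lambda>v. v \<le> r"]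
      by (intro finite_measure_mono) auto
    also have "\<dots> = measure N {x\<in>A. V x \<le> t} - measure N {x\<in>A. V x \<le> r}"
      using sets[of "\<lambda>v. v \<le> r"] sets[of "\<lambda>v. v \<le> t"] that by (intro finite_measure_Diff) auto
    finally show ?thesis .
  qed
  consider "t \<le> 0" | "1 < t" | "0 < t" "t \<le> 1" by linarith
  then have "measure N {x\<in>A. V x = t} \<le> 0"
  proof cases
    case 1
    have "measure N {x\<in>A. V x = t} \<le> measure N {x\<in>A. V x \<le> 0}"
      using 1 sets[of "\<lambda>v. v \<le> 0"] by (intro finite_measure_mono) auto
    then show ?thesis using uniform by (simp add: uniform_on_def)
  next
    case 2
    have "measure N {x\<in>A. V x = t} \<le> measure N (A - {x\<in>A. V x \<le> 1})"
      using 2 A sets[of "\<lambda>v. v \<le> 1"] by (intro finite_measure_mono) auto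
    also have "\<dots> = measure N A - measure N {x\<in>A. V x \<le> 1}"
      using A sets[of "\<lambda>v. v \<le> 1"] by (intro finite_measure_Diff) auto
    finally show ?thesis using uniform by (simp add: uniform_on_def)
  next
    case 3
    show ?thesis
    proof (rule le_of_le_plus_divide_power2[where c = "t * measure N A"], simp)
      fix n :: nat
      have pos: "0 < t / 2^n" "t / 2^n \<le> t" using 3 by (auto simp: field_simps)
      have unif: "measure N {x\<in>A. V x \<le> r} = r * measure N A" if "0 \<le> r" "r \<le> 1" for r
        using uniform that by (simp add: uniform_on_def)
      have "measure N {x\<in>A. V x = t} \<le> measure N {x\<in>A. V x \<le> t} - measure N {x\<in>A. V x \<le> t - t / 2^n}"
        by (rule level_le) (use pos in simp)
      also have "\<dots> = t / 2^n * measure N A"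
        using unif[of t] unif[of "t - t / 2^n"] pos 3 by (simp add: algebra_simps)
      finally show "measure N {x\<in>A. V x = t} \<le> t * measure N A / 2^n" by simp
    qed
  qed
  then show ?thesis using measure_nonneg[of N] by (simp add: antisym)
qed

lemma uniform_on_open_interval:
  assumes "finite_measure N" and uniform: "uniform_on N A V"
    and A: "A \<in> sets N" and V: "V \<in> borel_measurable N" and "\<And>x. 0 \<le> V x" "\<And>x. V x \<le> 1"
  shows "uniform_on N A (\<lambda>x. if 0 < V x \<and> V x < 1 then V x else 1/2)"
proof -
  interpret finite_measure N by fact
  let ?V = "\<lambda>x. if 0 < V x \<and> V x < 1 then V x else 1/2"
  have sets: "{x\<in>A. V x = c} \<in> sets N" "{x\<in>A. V x \<le> c} \<in> sets N" "{x\<in>A. ?V x \<le> c} \<in> sets N" for c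
    using V by (intro sets_Collect_in A; measurable)+
  have null: "{x\<in>A. V x = c} \<in> null_sets N" for c
    using uniform_on_level_null[OF assms(1) uniform A V, of c] sets(1)[of c]
    by (simp add: null_sets_def emeasure_eq_measure)
  have AE: "AE x in N. x \<in> A \<longrightarrow> ?V x = V x"
    using AE_not_in[OF null[of 0]] AE_not_in[OF null[of 1]]
  proof eventually_elim
    case (elim x)
    then show ?case using assms(5,6)[of x] by auto
  qed
  show ?thesis unfolding uniform_on_def
  proof (intro allI impI)
    fix t :: real assume "0 \<le> t" "t \<le> 1"
    have "AE x in N. x \<in> {x\<in>A. ?V x \<le> t} \<longleftrightarrow> x \<in> {x\<in>A. V x \<le> t}"
      using AE by eventually_elim auto
    then have "measure N {x\<in>A. ?V x \<le> t} = measure N {x\<in>A. V x \<le> t}"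
      using sets by (intro measure_eq_AE)
    then show "measure N {x\<in>A. ?V x \<le> t} = t * measure N A"
      using uniform \<open>0 \<le> t\<close> \<open>t \<le> 1\<close> by (simp add: uniform_on_def)
  qed
qed

lemma atomless_exists_uniform_on:
  assumes "prob_space M" and "atomless M" and A: "A \<in> sets M"
  obtains V where "V \<in> borel_measurable M" "\<And>x. 0 \<le> V x" "\<And>x. V x \<le> 1" "uniform_on M A V"
proof -
  interpret prob_space M by fact
  have "\<exists>C\<in>sets M. C \<subseteq> B \<and> measure M C = measure M B / 2" if "B \<in> sets M" for B
    using atomless_subset_measure_eq[OF assms(1,2) that, of "measure M B / 2"] by auto
  then obtain s where s: "\<forall>B. s B \<subseteq> B" "\<forall>B\<in>sets M. s B \<in> sets M \<and> measure M (s B) = measure M B / 2"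
    using ex_measurable_subset_choice[of M "\<lambda>B C. measure M C = measure M B / 2"] by blast
  interpret dyadic_halving M s A M
    by unfold_locales (simp_all add: s A)
  show ?thesis by (rule that[OF borel_measurable_value value_bounds uniform_on_value])
qed

lemma isCont_measure_level_le:
  fixes V :: "'a \<Rightarrow> real"
  assumes "finite_measure Q" and B: "B \<in> sets Q" and V: "V \<in> borel_measurable Q"
    and null: "\<And>t. measure Q {x\<in>B. V x = t} = 0"
  shows "isCont (\<lambda>t. measure Q {x\<in>B. V x \<le> t}) t"
proof -
  interpret finite_measure Q by fact
  define \<mu> where "\<mu> = distr (density Q (indicator B)) borel V"
  have \<mu>: "measure \<mu> S = measure Q {x\<in>B. V x \<in> S}" if "S \<in> sets borel" for S
  proof -
    have "V -` S \<inter> space Q \<in> sets Q" using V that by measurable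
    then have "measure \<mu> S = measure Q (B \<inter> (V -` S \<inter> space Q))"
      unfolding \<mu>_def using V that B by (simp add: measure_distr measure_restricted)
    also have "B \<inter> (V -` S \<inter> space Q) = {x\<in>B. V x \<in> S}" using sets.sets_into_space[OF B] by auto
    finally show ?thesis .
  qed
  interpret \<mu>: finite_borel_measure \<mu>
  proof -
    have "finite_measure \<mu>" unfolding \<mu>_def
      using finite_measure.finite_measure_distr[OF finite_measure_restricted[OF B], of V borel] V by simp
    then show "finite_borel_measure \<mu>"
      by (intro finite_borel_measure.intro finite_borel_measure_axioms.intro) (simp_all add: \<mu>_def)
  qed
  have "cdf \<mu> = (\<lambda>t. measure Q {x\<in>B. V x \<le> t})" by (intro ext) (simp add: cdf_def2 \<mu>)
  moreover have "isCont (cdf \<mu>) t" using null[of t] by (simp add: \<mu>.isCont_cdf \<mu>)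
  ultimately show ?thesis by simp
qed

lemma exists_half_increment:
  fixes G :: "real \<Rightarrow> real"
  assumes "\<And>t. isCont G t"
  shows "\<exists>r. 0 \<le> r \<and> r \<le> 1/2 \<and> G (r + 1/2) - G r = (G 1 - G 0) / 2"
proof -
  define f where "f r = G (r + 1/2) - G r" for r
  have f: "continuous_on {0..1/2} f"
    unfolding f_def by (intro continuous_at_imp_continuous_on ballI continuous_intros isCont_o2[OF _ assms]) auto
  have sum: "f 0 + f (1/2) = G 1 - G 0" by (simp add: f_def)
  show ?thesis
  proof (cases "f 0 \<le> (G 1 - G 0) / 2")
    case True
    then obtain r where "0 \<le> r" "r \<le> 1/2" "f r = (G 1 - G 0) / 2"
      using sum IVT'[of f 0 "(G 1 - G 0) / 2" "1/2", OF _ _ _ f] by auto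
    then show ?thesis by (auto simp: f_def)
  next
    case False
    then obtain r where "0 \<le> r" "r \<le> 1/2" "f r = (G 1 - G 0) / 2"
      using sum IVT2'[of f "1/2" "(G 1 - G 0) / 2" 0, OF _ _ _ f] by auto
    then show ?thesis by (auto simp: f_def)
  qed
qed

text \<open>A set can be halved simultaneously for \<open>M\<close> and for any \<open>Q \<ll> M\<close>: cut it at a level
  of a uniform variable where the continuous distribution function of \<open>Q\<close> increases by half.\<close>

lemma atomless_fair_half:
  assumes P: "prob_space M" and atl: "atomless M" and Q: "finite_measure Q" "sets Q = sets M"
    and ac: "\<And>S. S \<in> sets M \<Longrightarrow> measure M S = 0 \<Longrightarrow> measure Q S = 0" and B: "B \<in> sets M"
  shows "\<exists>C\<in>sets M. C \<subseteq> B \<and> measure M C = measure M B / 2 \<and> measure Q C = measure Q B / 2"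
proof -
  interpret prob_space M by fact
  interpret Q: finite_measure Q by fact
  obtain V where V: "V \<in> borel_measurable M" "\<And>x. 0 \<le> V x" "\<And>x. V x \<le> 1" and unif: "uniform_on M B V"
    using atomless_exists_uniform_on[OF P atl B] by metis
  have sets: "{x\<in>B. V x \<le> t} \<in> sets M" "{x\<in>B. V x = t} \<in> sets M" for t
    using V(1) by (intro sets_Collect_in B; measurable)+
  have Q_null: "measure Q {x\<in>B. V x = t} = 0" for t
    using ac[OF sets(2) uniform_on_level_null[OF finite_measure_axioms unif B V(1)]] .
  define G where "G t = measure Q {x\<in>B. V x \<le> t}" for t
  have "V \<in> borel_measurable Q" using V(1) by (simp add: measurable_cong_sets[OF Q(2) refl])
  then have G_cont: "isCont G t" for t
    unfolding G_def using Q(1) B Q(2) Q_null by (intro isCont_measure_level_le) auto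
  then obtain r where r: "0 \<le> r" "r \<le> 1/2" "G (r + 1/2) - G r = (G 1 - G 0) / 2"
    using exists_half_increment[OF G_cont] by blast
  have "{x\<in>B. V x \<le> 0} = {x\<in>B. V x = 0}" using V(2) by (auto simp: order.eq_iff)
  moreover have "{x\<in>B. V x \<le> 1} = B" using V(3) by auto
  ultimately
  have G01: "G 0 = 0" "G 1 = measure Q B" using Q_null[of 0] by (simp_all add: G_def)
  define C where "C = {x\<in>B. V x \<le> r + 1/2} - {x\<in>B. V x \<le> r}"
  have C: "C \<in> sets M" "C \<subseteq> B" using sets by (auto simp: C_def)
  have "measure Q C = G (r + 1/2) - G r"
    unfolding C_def G_def using sets Q(2) by (intro Q.finite_measure_Diff) auto
  then have "measure Q C = measure Q B / 2" using r G01 by simp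
  have "measure M C = measure M {x\<in>B. V x \<le> r + 1/2} - measure M {x\<in>B. V x \<le> r}"
    unfolding C_def using sets by (intro finite_measure_Diff) auto
  also have "\<dots> = (r + 1/2) * measure M B - r * measure M B"
    using unif r unfolding uniform_on_def by simp
  finally have "measure M C = measure M B / 2" by (simp add: algebra_simps)
  with C \<open>measure Q C = measure Q B / 2\<close> show ?thesis by blast
qed

lemma atomless_exists_uniform_on_both:
  assumes P: "prob_space M" and atl: "atomless M" and Q: "finite_measure Q" "sets Q = sets M"
    and ac: "\<And>S. S \<in> sets M \<Longrightarrow> measure M S = 0 \<Longrightarrow> measure Q S = 0" and A: "A \<in> sets M"
  obtains V where "V \<in> borel_measurable M" "\<And>x. 0 < V x \<and> V x < 1" "uniform_on M A V" "uniform_on Q A V"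
proof -
  interpret prob_space M by fact
  obtain s where s: "\<forall>B. s B \<subseteq> B"
    "\<forall>B\<in>sets M. s B \<in> sets M \<and> measure M (s B) = measure M B / 2 \<and> measure Q (s B) = measure Q B / 2"
    using ex_measurable_subset_choice[OF atomless_fair_half[OF P atl Q ac]] by blast
  interpret M: dyadic_halving M s A M
    by unfold_locales (simp_all add: s A)
  interpret Q: dyadic_halving M s A Q
    by (intro dyadic_halving.intro dyadic_halving_axioms.intro M.dyadic_splitting_axioms Q(1))
      (simp_all add: s Q(2))
  let ?V = "dyadic_value s A"
  have V: "?V \<in> borel_measurable M" "?V \<in> borel_measurable Q"
    using M.borel_measurable_value by (simp_all add: measurable_cong_sets[OF Q(2) refl])
  have A_Q: "A \<in> sets Q" using A Q(2) by simp
  show ?thesis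
  proof
    show "(\<lambda>x. if 0 < ?V x \<and> ?V x < 1 then ?V x else 1/2) \<in> borel_measurable M" using V by measurable
    show "uniform_on M A (\<lambda>x. if 0 < ?V x \<and> ?V x < 1 then ?V x else 1/2)"
      by (rule uniform_on_open_interval[OF finite_measure_axioms M.uniform_on_value A V(1) M.value_bounds])
    show "uniform_on Q A (\<lambda>x. if 0 < ?V x \<and> ?V x < 1 then ?V x else 1/2)"
      by (rule uniform_on_open_interval[OF Q(1) Q.uniform_on_value A_Q V(2) M.value_bounds])
  qed auto
qed

section \<open>Rearrangements on an atomless space\<close>

lemma nn_integral_indicator_uniform_measure:
  fixes Y :: "'a \<Rightarrow> real" and f :: "real \<Rightarrow> ennreal"
  assumes Y: "Y \<in> borel_measurable N" and A: "A \<in> sets N"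
    and A0: "emeasure N A \<noteq> 0" and Ainf: "emeasure N A \<noteq> \<infinity>"
    and f: "f \<in> borel_measurable borel"
  shows "(\<integral>\<^sup>+\<omega>. f (Y \<omega>) * indicator A \<omega> \<partial>N) = emeasure N A * (\<integral>\<^sup>+x. f x \<partial>distr (uniform_measure N A) borel Y)"
proof -
  have YU: "Y \<in> borel_measurable (uniform_measure N A)"
    unfolding measurable_cong_sets[OF sets_uniform_measure refl] by (rule Y)
  have "(\<integral>\<^sup>+x. f x \<partial>distr (uniform_measure N A) borel Y) = (\<integral>\<^sup>+\<omega>. f (Y \<omega>) \<partial>uniform_measure N A)"
    using YU f by (intro nn_integral_distr) auto
  also have "\<dots> = (\<integral>\<^sup>+\<omega>. f (Y \<omega>) * indicator A \<omega> \<partial>N) / emeasure N A"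
    using Y f A by (intro nn_integral_uniform_measure) auto
  finally have "emeasure N A * (\<integral>\<^sup>+x. f x \<partial>distr (uniform_measure N A) borel Y)
      = emeasure N A * ((\<integral>\<^sup>+\<omega>. f (Y \<omega>) * indicator A \<omega> \<partial>N) / emeasure N A)" by simp
  also have "\<dots> = ((\<integral>\<^sup>+\<omega>. f (Y \<omega>) * indicator A \<omega> \<partial>N) * emeasure N A) / emeasure N A"
    by (simp only: ennreal_times_divide mult.commute)
  also have "\<dots> = (\<integral>\<^sup>+\<omega>. f (Y \<omega>) * indicator A \<omega> \<partial>N)"
    using A0 Ainf by (intro ennreal_mult_divide_eq) auto
  finally show ?thesis by simp
qed

lemma distr_quantile_uniform_on:
  assumes mu: "real_distribution \<mu>" and nu: "finite_measure \<nu>" and A: "A \<in> sets \<nu>"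
    and Apos: "0 < measure \<nu> A"
    and V01: "\<And>x. 0 < V x \<and> V x < 1" and uniform: "uniform_on \<nu> A V"
    and Y: "Y \<in> borel_measurable \<nu>" and YA: "\<And>\<omega>. \<omega> \<in> A \<Longrightarrow> Y \<omega> = Inf {x. V \<omega> \<le> cdf \<mu> x}"
  shows "distr (uniform_measure \<nu> A) borel Y = \<mu>"
proof -
  interpret cdf_distribution \<mu> using mu by (simp add: cdf_distribution_def)
  interpret nu: finite_measure \<nu> by fact
  have eA: "emeasure \<nu> A \<noteq> 0" "emeasure \<nu> A \<noteq> \<infinity>" using Apos by (auto simp: nu.emeasure_eq_measure)
  interpret U: prob_space "uniform_measure \<nu> A" by (rule prob_space_uniform_measure[OF eA])
  have YU: "Y \<in> borel_measurable (uniform_measure \<nu> A)"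
    unfolding measurable_cong_sets[OF sets_uniform_measure refl] by (rule Y)
  have rd: "real_distribution (distr (uniform_measure \<nu> A) borel Y)"
    using YU by (rule U.real_distribution_distr)
  show ?thesis
  proof (rule cdf_unique[OF rd mu], rule ext)
    fix x
    have pre: "Y -` {..x} \<inter> space \<nu> \<in> sets \<nu>" using Y by measurable
    have sub: "A \<subseteq> space \<nu>" using A by (rule sets.sets_into_space)
    have seteq: "A \<inter> (Y -` {..x} \<inter> space \<nu>) = {\<omega>\<in>A. V \<omega> \<le> cdf \<mu> x}"
    proof -
      have "Y \<omega> \<le> x \<longleftrightarrow> V \<omega> \<le> cdf \<mu> x" if "\<omega> \<in> A" for \<omega>
        using pseudoinverse[of "V \<omega>" x] V01[of \<omega>] YA[OF that] by simp
      then show ?thesis using sub by auto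
    qed
    have "cdf (distr (uniform_measure \<nu> A) borel Y) x = measure (uniform_measure \<nu> A) (Y -` {..x} \<inter> space (uniform_measure \<nu> A))"
      unfolding cdf_def using YU by (simp add: measure_distr)
    also have "\<dots> = measure \<nu> (A \<inter> (Y -` {..x} \<inter> space \<nu>)) / measure \<nu> A"
      using pre eA by simp
    also have "\<dots> = cdf \<mu> x * measure \<nu> A / measure \<nu> A"
      unfolding seteq using uniform cdf_nonneg cdf_bounded_prob by (simp add: uniform_on_def)
    also have "\<dots> = cdf \<mu> x" using Apos by simp
    finally show "cdf (distr (uniform_measure \<nu> A) borel Y) x = cdf \<mu> x" .
  qed
qed

lemma nn_integral_indicator_null_set:
  assumes "A \<in> null_sets N"
  shows "(\<integral>\<^sup>+\<omega>. f \<omega> * indicator A \<omega> \<partial>N) = 0"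
proof -
  have "(\<integral>\<^sup>+\<omega>. f \<omega> * indicator A \<omega> \<partial>N) = (\<integral>\<^sup>+\<omega>. 0 \<partial>N)"
    using AE_not_in[OF assms] by (intro nn_integral_cong_AE) (auto elim!: eventually_mono)
  then show ?thesis by simp
qed

lemma nn_integral_quantile_indicator:
  fixes f :: "real \<Rightarrow> ennreal"
  assumes \<mu>: "real_distribution \<mu>" and \<nu>: "finite_measure \<nu>" and A: "A \<in> sets \<nu>"
    and V01: "\<And>x. 0 < V x \<and> V x < 1" and uniform: "uniform_on \<nu> A V"
    and Y: "Y \<in> borel_measurable \<nu>" and YA: "\<And>\<omega>. \<omega> \<in> A \<Longrightarrow> Y \<omega> = Inf {x. V \<omega> \<le> cdf \<mu> x}"
    and f: "f \<in> borel_measurable borel"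
  shows "(\<integral>\<^sup>+\<omega>. f (Y \<omega>) * indicator A \<omega> \<partial>\<nu>) = emeasure \<nu> A * (\<integral>\<^sup>+x. f x \<partial>\<mu>)"
proof (cases "measure \<nu> A = 0")
  case True
  then have "A \<in> null_sets \<nu>" "emeasure \<nu> A = 0"
    using A \<nu> by (simp_all add: null_sets_def finite_measure.emeasure_eq_measure)
  then show ?thesis by (simp add: nn_integral_indicator_null_set)
next
  case False
  then have pos: "0 < measure \<nu> A" by (simp add: zero_less_measure_iff)
  then have "emeasure \<nu> A \<noteq> 0" "emeasure \<nu> A \<noteq> \<infinity>"
    using \<nu> by (auto simp: finite_measure.emeasure_eq_measure)
  then show ?thesis
    using nn_integral_indicator_uniform_measure[OF Y A _ _ f] distr_quantile_uniform_on[OF \<mu> \<nu> A pos V01 uniform Y YA]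
    by simp
qed

lemma
  assumes Z: "Z \<in> densities M" and S: "S \<in> sets M"
  shows emeasure_density_densities:
      "emeasure (density M (\<lambda>\<omega>. ennreal (Z \<omega>))) S = ennreal (\<integral>\<omega>. Z \<omega> * indicator S \<omega> \<partial>M)"
    and measure_density_densities:
      "measure (density M (\<lambda>\<omega>. ennreal (Z \<omega>))) S = (\<integral>\<omega>. Z \<omega> * indicator S \<omega> \<partial>M)"
proof -
  have Zm: "Z \<in> borel_measurable M" and Zpos: "AE \<omega> in M. 0 \<le> Z \<omega>" and Zint: "integrable M Z"
    using Z by (auto simp: densities_def)
  have pos: "AE \<omega> in M. 0 \<le> Z \<omega> * indicator S \<omega>"
    using Zpos by eventually_elim (auto simp: indicator_def)
  have "emeasure (density M (\<lambda>\<omega>. ennreal (Z \<omega>))) S = (\<integral>\<^sup>+\<omega>. ennreal (Z \<omega> * indicator S \<omega>) \<partial>M)"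
    using Zm S by (auto simp: emeasure_density indicator_def intro!: nn_integral_cong)
  also have "\<dots> = ennreal (\<integral>\<omega>. Z \<omega> * indicator S \<omega> \<partial>M)"
    using integrable_real_mult_indicator[OF S Zint] pos by (intro nn_integral_eq_integral) auto
  finally show "emeasure (density M (\<lambda>\<omega>. ennreal (Z \<omega>))) S = ennreal (\<integral>\<omega>. Z \<omega> * indicator S \<omega> \<partial>M)" .
  moreover have "0 \<le> (\<integral>\<omega>. Z \<omega> * indicator S \<omega> \<partial>M)"
    using pos by (rule integral_nonneg_AE)
  ultimately show "measure (density M (\<lambda>\<omega>. ennreal (Z \<omega>))) S = (\<integral>\<omega>. Z \<omega> * indicator S \<omega> \<partial>M)"
    by (simp add: measure_def)
qed

lemma finite_measure_density_densities:
  assumes "Z \<in> densities M"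
  shows "finite_measure (density M (\<lambda>\<omega>. ennreal (Z \<omega>)))"
  using emeasure_density_densities[OF assms sets.top] by (intro finite_measureI) simp

lemma measure_density_densities_null:
  assumes "Z \<in> densities M" and S: "S \<in> sets M" and "measure M S = 0" and "finite_measure M"
  shows "measure (density M (\<lambda>\<omega>. ennreal (Z \<omega>))) S = 0"
proof -
  have "S \<in> null_sets M" using assms by (simp add: null_sets_def finite_measure.emeasure_eq_measure)
  moreover have "Z \<in> borel_measurable M" using assms(1) by (simp add: densities_def)
  ultimately have "(\<integral>\<omega>. Z \<omega> * indicator S \<omega> \<partial>M) = (\<integral>\<omega>. 0 \<partial>M)"
    using AE_not_in[of S M] S by (intro integral_cong_AE) (auto elim!: eventually_mono)
  then show ?thesis using measure_density_densities[OF assms(1) S] by simp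
qed

text \<open>Inside \<open>A\<close>, \<open>X\<close> is replaced by the quantile transform of a variable that is uniform on \<open>A\<close>
  for both \<open>M\<close> and \<open>Q\<close>; the result has the same law on \<open>A\<close> as \<open>X\<close> under \<open>M\<close>, and under \<open>Q\<close>
  it is independent of the density \<open>dQ/dM\<close> on \<open>A\<close>.\<close>

lemma atomless_rearrangement_on:
  fixes X :: "'a \<Rightarrow> real"
  assumes P: "prob_space M" and atl: "atomless M" and Q: "finite_measure Q" "sets Q = sets M"
    and ac: "\<And>S. S \<in> sets M \<Longrightarrow> measure M S = 0 \<Longrightarrow> measure Q S = 0"
    and A: "A \<in> sets M" and X: "X \<in> borel_measurable M"
  obtains X' where "X' \<in> borel_measurable M"
    and "\<And>f. f \<in> borel_measurable borel \<Longrightarrow>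
      (\<integral>\<^sup>+\<omega>. f (X' \<omega>) * indicator A \<omega> \<partial>M) = (\<integral>\<^sup>+\<omega>. f (X \<omega>) * indicator A \<omega> \<partial>M)"
    and "\<And>f. f \<in> borel_measurable borel \<Longrightarrow>
      (\<integral>\<^sup>+\<omega>. f (X' \<omega>) * indicator A \<omega> \<partial>Q)
        = ennreal (measure Q A / measure M A) * (\<integral>\<^sup>+\<omega>. f (X \<omega>) * indicator A \<omega> \<partial>M)"
proof -
  interpret prob_space M by fact
  interpret Q: finite_measure Q by fact
  have A_Q: "A \<in> sets Q" using A Q(2) by simp
  show ?thesis
  proof (cases "measure M A = 0")
    case True
    then have "A \<in> null_sets M" "A \<in> null_sets Q"
      using A A_Q ac[OF A] by (simp_all add: null_sets_def emeasure_eq_measure Q.emeasure_eq_measure)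
    then show ?thesis using X by (intro that[of X]) (simp_all add: nn_integral_indicator_null_set)
  next
    case False
    then have eA: "emeasure M A \<noteq> 0" "emeasure M A \<noteq> \<infinity>" by (auto simp: emeasure_eq_measure)
    obtain V where V: "V \<in> borel_measurable M" "\<And>x. 0 < V x \<and> V x < 1"
      and VM: "uniform_on M A V" and VQ: "uniform_on Q A V"
      using atomless_exists_uniform_on_both[OF P atl Q ac A] by metis
    interpret U: prob_space "uniform_measure M A" by (rule prob_space_uniform_measure[OF eA])
    define \<mu> where "\<mu> = distr (uniform_measure M A) borel X"
    have \<mu>: "real_distribution \<mu>"
      unfolding \<mu>_def using X by (intro U.real_distribution_distr) (simp add: measurable_cong_sets[OF sets_uniform_measure refl])
    interpret \<mu>: cdf_distribution \<mu> using \<mu> by (simp add: cdf_distribution_def)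
    define X' where "X' \<omega> = (if \<omega> \<in> A then Inf {x. V \<omega> \<le> cdf \<mu> x} else X \<omega>)" for \<omega>
    have "V \<in> measurable M (restrict_space borel {0<..<1})"
      using V by (intro measurable_restrict_space2) auto
    then have "(\<lambda>\<omega>. Inf {x. V \<omega> \<le> cdf \<mu> x}) \<in> borel_measurable M"
      using measurable_comp[OF _ \<mu>.measurable_CI] by (simp add: comp_def)
    then have X': "X' \<in> borel_measurable M" "X' \<in> borel_measurable Q"
      unfolding X'_def using X A by (auto simp: measurable_cong_sets[OF Q(2) refl] intro!: measurable_If_set)
    have emeasure_Q: "emeasure Q A = ennreal (measure Q A / measure M A) * emeasure M A"
      using False by (simp add: Q.emeasure_eq_measure emeasure_eq_measure ennreal_mult[symmetric])
    show ?thesis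
    proof (rule that[OF X'(1)])
      fix f :: "real \<Rightarrow> ennreal" assume f: "f \<in> borel_measurable borel"
      have X_\<mu>: "(\<integral>\<^sup>+\<omega>. f (X \<omega>) * indicator A \<omega> \<partial>M) = emeasure M A * (\<integral>\<^sup>+x. f x \<partial>\<mu>)"
        unfolding \<mu>_def using nn_integral_indicator_uniform_measure[OF X A eA f] .
      show "(\<integral>\<^sup>+\<omega>. f (X' \<omega>) * indicator A \<omega> \<partial>M) = (\<integral>\<^sup>+\<omega>. f (X \<omega>) * indicator A \<omega> \<partial>M)"
        using nn_integral_quantile_indicator[OF \<mu> finite_measure_axioms A V(2) VM X'(1) _ f] X_\<mu>
        by (simp add: X'_def)
      show "(\<integral>\<^sup>+\<omega>. f (X' \<omega>) * indicator A \<omega> \<partial>Q)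
          = ennreal (measure Q A / measure M A) * (\<integral>\<^sup>+\<omega>. f (X \<omega>) * indicator A \<omega> \<partial>M)"
        using nn_integral_quantile_indicator[OF \<mu> Q(1) A_Q V(2) VQ X'(2) _ f] X_\<mu> emeasure_Q
        by (simp add: X'_def mult.assoc)
    qed
  qed
qed

definition paste :: "(nat \<Rightarrow> 'a set) \<Rightarrow> (nat \<Rightarrow> 'a \<Rightarrow> 'b) \<Rightarrow> ('a \<Rightarrow> 'b) \<Rightarrow> 'a \<Rightarrow> 'b" where
  "paste A f g \<omega> = (if \<omega> \<in> (\<Union>j. A j) then f (THE j. \<omega> \<in> A j) \<omega> else g \<omega>)"

lemma paste_in:
  assumes "disjoint_family A" and "\<omega> \<in> A i"
  shows "paste A f g \<omega> = f i \<omega>"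
proof -
  have "(THE j. \<omega> \<in> A j) = i"
    using assms unfolding disjoint_family_on_def by (intro the_equality) blast+
  then show ?thesis using assms(2) by (auto simp: paste_def)
qed

lemma paste_out: "\<omega> \<notin> (\<Union>j. A j) \<Longrightarrow> paste A f g \<omega> = g \<omega>"
  by (simp add: paste_def)

lemma measurable_paste:
  assumes A: "\<And>j. A j \<in> sets M" "disjoint_family A"
    and f: "\<And>j. f j \<in> measurable M N" and g: "g \<in> measurable M N"
  shows "paste A f g \<in> measurable M N"
proof -
  define B where "B n = (case n of 0 \<Rightarrow> space M - (\<Union>j. A j) | Suc j \<Rightarrow> A j)" for n
  show ?thesis
  proof (rule measurable_piecewise_restrict2[of B])
    show "B n \<in> sets M" for n using A by (cases n) (auto simp: B_def)
    have "B n \<subseteq> space M" for n using sets.sets_into_space[OF A(1)] by (cases n) (auto simp: B_def)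
    moreover have "space M \<subseteq> (\<Union>n. B n)"
    proof
      fix x assume x: "x \<in> space M"
      show "x \<in> (\<Union>n. B n)"
      proof (cases "x \<in> (\<Union>j. A j)")
        case True
        then obtain j where "x \<in> B (Suc j)" by (auto simp: B_def)
        then show ?thesis by blast
      next
        case False
        then have "x \<in> B 0" using x by (simp add: B_def)
        then show ?thesis by blast
      qed
    qed
    ultimately show "space M = (\<Union>n. B n)" by blast
    show "\<exists>h\<in>measurable M N. \<forall>x\<in>B n. paste A f g x = h x" for n
    proof (cases n)
      case 0
      then show ?thesis using g paste_out by (auto simp: B_def intro!: bexI[of _ g])
    next
      case (Suc j)
      then show ?thesis using f paste_in[OF A(2)] by (auto simp: B_def intro!: bexI[of _ "f j"])
    qed
  qed
qed

lemma nn_integral_eq_on_partition: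
  fixes A :: "nat \<Rightarrow> 'a set"
  assumes h: "h \<in> borel_measurable M" "h' \<in> borel_measurable M"
    and A: "\<And>j. A j \<in> sets M" "disjoint_family A"
    and on_cells: "\<And>j. (\<integral>\<^sup>+\<omega>. h \<omega> * indicator (A j) \<omega> \<partial>M) = (\<integral>\<^sup>+\<omega>. h' \<omega> * indicator (A j) \<omega> \<partial>M)"
    and outside: "\<And>\<omega>. \<omega> \<in> space M \<Longrightarrow> \<omega> \<notin> (\<Union>j. A j) \<Longrightarrow> h \<omega> = h' \<omega>"
  shows "(\<integral>\<^sup>+\<omega>. h \<omega> \<partial>M) = (\<integral>\<^sup>+\<omega>. h' \<omega> \<partial>M)"
proof -
  let ?R = "space M - (\<Union>j. A j)"
  have split: "(\<integral>\<^sup>+\<omega>. k \<omega> \<partial>M)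
      = (\<Sum>j. \<integral>\<^sup>+\<omega>. k \<omega> * indicator (A j) \<omega> \<partial>M) + (\<integral>\<^sup>+\<omega>. k \<omega> * indicator ?R \<omega> \<partial>M)"
    if k: "k \<in> borel_measurable M" for k
  proof -
    have "k \<omega> = (\<Sum>j. k \<omega> * indicator (A j) \<omega>) + k \<omega> * indicator ?R \<omega>" if "\<omega> \<in> space M" for \<omega>
    proof -
      have "(\<Sum>j. k \<omega> * indicator (A j) \<omega>) = k \<omega> * indicator (\<Union>j. A j) \<omega>"
        by (simp add: suminf_indicator[OF A(2)])
      then show ?thesis using that by (auto simp: indicator_def)
    qed
    then have "(\<integral>\<^sup>+\<omega>. k \<omega> \<partial>M)
        = (\<integral>\<^sup>+\<omega>. (\<Sum>j. k \<omega> * indicator (A j) \<omega>) + k \<omega> * indicator ?R \<omega> \<partial>M)"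
      by (intro nn_integral_cong) auto
    also have "\<dots> = (\<integral>\<^sup>+\<omega>. (\<Sum>j. k \<omega> * indicator (A j) \<omega>) \<partial>M) + (\<integral>\<^sup>+\<omega>. k \<omega> * indicator ?R \<omega> \<partial>M)"
      using k A by (intro nn_integral_add) auto
    also have "(\<integral>\<^sup>+\<omega>. (\<Sum>j. k \<omega> * indicator (A j) \<omega>) \<partial>M) = (\<Sum>j. \<integral>\<^sup>+\<omega>. k \<omega> * indicator (A j) \<omega> \<partial>M)"
      using k A by (intro nn_integral_suminf) auto
    finally show ?thesis .
  qed
  have "(\<integral>\<^sup>+\<omega>. h \<omega> * indicator ?R \<omega> \<partial>M) = (\<integral>\<^sup>+\<omega>. h' \<omega> * indicator ?R \<omega> \<partial>M)"
    using outside by (intro nn_integral_cong) (auto simp: indicator_def)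
  then show ?thesis using split[OF h(1)] split[OF h(2)] on_cells by simp
qed

definition partition_average :: "'a measure \<Rightarrow> ('a \<Rightarrow> real) \<Rightarrow> (nat \<Rightarrow> 'a set) \<Rightarrow> 'a \<Rightarrow> real" where
  "partition_average M Z A = paste A (\<lambda>j _. (\<integral>\<omega>. Z \<omega> * indicator (A j) \<omega> \<partial>M) / measure M (A j)) Z"

lemma borel_measurable_partition_average:
  "Z \<in> borel_measurable M \<Longrightarrow> (\<And>j. A j \<in> sets M) \<Longrightarrow> disjoint_family A \<Longrightarrow>
    partition_average M Z A \<in> borel_measurable M"
  unfolding partition_average_def by (intro measurable_paste) auto

lemma atomless_rearrangement_cells:
  fixes X :: "'a \<Rightarrow> real" and A :: "nat \<Rightarrow> 'a set"
  assumes P: "prob_space M" and atl: "atomless M" and Q: "finite_measure Q" "sets Q = sets M"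
    and ac: "\<And>S. S \<in> sets M \<Longrightarrow> measure M S = 0 \<Longrightarrow> measure Q S = 0"
    and A: "\<And>j. A j \<in> sets M" and X: "X \<in> borel_measurable M"
  obtains Y where "\<And>j. Y j \<in> borel_measurable M"
    and "\<And>j f. f \<in> borel_measurable borel \<Longrightarrow>
      (\<integral>\<^sup>+\<omega>. f (Y j \<omega>) * indicator (A j) \<omega> \<partial>M) = (\<integral>\<^sup>+\<omega>. f (X \<omega>) * indicator (A j) \<omega> \<partial>M)"
    and "\<And>j f. f \<in> borel_measurable borel \<Longrightarrow>
      (\<integral>\<^sup>+\<omega>. f (Y j \<omega>) * indicator (A j) \<omega> \<partial>Q)
        = ennreal (measure Q (A j) / measure M (A j)) * (\<integral>\<^sup>+\<omega>. f (X \<omega>) * indicator (A j) \<omega> \<partial>M)"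
proof -
  have "\<forall>j. \<exists>Y. Y \<in> borel_measurable M \<and> (\<forall>f\<in>borel_measurable borel.
      (\<integral>\<^sup>+\<omega>. f (Y \<omega>) * indicator (A j) \<omega> \<partial>M) = (\<integral>\<^sup>+\<omega>. f (X \<omega>) * indicator (A j) \<omega> \<partial>M) \<and>
      (\<integral>\<^sup>+\<omega>. f (Y \<omega>) * indicator (A j) \<omega> \<partial>Q)
        = ennreal (measure Q (A j) / measure M (A j)) * (\<integral>\<^sup>+\<omega>. f (X \<omega>) * indicator (A j) \<omega> \<partial>M))"
  proof
    fix j
    show "\<exists>Y. Y \<in> borel_measurable M \<and> (\<forall>f\<in>borel_measurable borel.
      (\<integral>\<^sup>+\<omega>. f (Y \<omega>) * indicator (A j) \<omega> \<partial>M) = (\<integral>\<^sup>+\<omega>. f (X \<omega>) * indicator (A j) \<omega> \<partial>M) \<and>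
      (\<integral>\<^sup>+\<omega>. f (Y \<omega>) * indicator (A j) \<omega> \<partial>Q)
        = ennreal (measure Q (A j) / measure M (A j)) * (\<integral>\<^sup>+\<omega>. f (X \<omega>) * indicator (A j) \<omega> \<partial>M))"
    proof (rule atomless_rearrangement_on[OF P atl Q ac A[of j] X])
      fix Y assume "Y \<in> borel_measurable M"
        "\<And>f. f \<in> borel_measurable borel \<Longrightarrow>
          (\<integral>\<^sup>+\<omega>. f (Y \<omega>) * indicator (A j) \<omega> \<partial>M) = (\<integral>\<^sup>+\<omega>. f (X \<omega>) * indicator (A j) \<omega> \<partial>M)"
        "\<And>f. f \<in> borel_measurable borel \<Longrightarrow>
          (\<integral>\<^sup>+\<omega>. f (Y \<omega>) * indicator (A j) \<omega> \<partial>Q)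
            = ennreal (measure Q (A j) / measure M (A j)) * (\<integral>\<^sup>+\<omega>. f (X \<omega>) * indicator (A j) \<omega> \<partial>M)"
      then show ?thesis by blast
    qed
  qed
  from choice[OF this] obtain Y where Y: "\<forall>j. Y j \<in> borel_measurable M \<and> (\<forall>f\<in>borel_measurable borel.
      (\<integral>\<^sup>+\<omega>. f (Y j \<omega>) * indicator (A j) \<omega> \<partial>M) = (\<integral>\<^sup>+\<omega>. f (X \<omega>) * indicator (A j) \<omega> \<partial>M) \<and>
      (\<integral>\<^sup>+\<omega>. f (Y j \<omega>) * indicator (A j) \<omega> \<partial>Q)
        = ennreal (measure Q (A j) / measure M (A j)) * (\<integral>\<^sup>+\<omega>. f (X \<omega>) * indicator (A j) \<omega> \<partial>M))"
    by blast
  show ?thesis by (rule that) (use Y in blast)+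
qed

lemma distr_paste_eq:
  fixes X :: "'a \<Rightarrow> real" and Y :: "nat \<Rightarrow> 'a \<Rightarrow> real"
  assumes A: "\<And>j. A j \<in> sets M" "disjoint_family A"
    and Y: "\<And>j. Y j \<in> borel_measurable M" and X: "X \<in> borel_measurable M"
    and same_law: "\<And>j T. T \<in> sets borel \<Longrightarrow>
      (\<integral>\<^sup>+\<omega>. indicator T (Y j \<omega>) * indicator (A j) \<omega> \<partial>M) = (\<integral>\<^sup>+\<omega>. indicator T (X \<omega>) * indicator (A j) \<omega> \<partial>M)"
  shows "distr M borel (paste A Y X) = distr M borel X"
proof (rule measure_eqI)
  fix T :: "real set" assume "T \<in> sets (distr M borel (paste A Y X))"
  then have T: "T \<in> sets borel" by simp
  have X': "paste A Y X \<in> borel_measurable M" using A Y X by (rule measurable_paste)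
  have "(\<integral>\<^sup>+\<omega>. indicator T (paste A Y X \<omega>) \<partial>M) = (\<integral>\<^sup>+\<omega>. indicator T (X \<omega>) \<partial>M)"
  proof (rule nn_integral_eq_on_partition[OF _ _ A])
    show "(\<lambda>\<omega>. indicator T (paste A Y X \<omega>)) \<in> borel_measurable M" using X' T by measurable
    show "(\<lambda>\<omega>. indicator T (X \<omega>)) \<in> borel_measurable M" using X T by measurable
    show "(\<integral>\<^sup>+\<omega>. indicator T (paste A Y X \<omega>) * indicator (A j) \<omega> \<partial>M)
      = (\<integral>\<^sup>+\<omega>. indicator T (X \<omega>) * indicator (A j) \<omega> \<partial>M)" for j
    proof -
      have "(\<integral>\<^sup>+\<omega>. indicator T (paste A Y X \<omega>) * indicator (A j) \<omega> \<partial>M)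
          = (\<integral>\<^sup>+\<omega>. indicator T (Y j \<omega>) * indicator (A j) \<omega> \<partial>M)"
        by (intro nn_integral_cong) (simp add: paste_in[OF A(2)] indicator_def)
      then show ?thesis using same_law[OF T] by simp
    qed
    show "indicator T (paste A Y X \<omega>) = indicator T (X \<omega>)" if "\<omega> \<notin> (\<Union>j. A j)" for \<omega>
      using that by (simp add: paste_out)
  qed
  moreover have "emeasure (distr M borel V) T = (\<integral>\<^sup>+\<omega>. indicator T (V \<omega>) \<partial>M)"
    if "V \<in> borel_measurable M" for V :: "'a \<Rightarrow> real"
    using that T by (simp add: nn_integral_distr[symmetric])
  ultimately show "emeasure (distr M borel (paste A Y X)) T = emeasure (distr M borel X) T"
    using X' X by simp
qed simp

lemma atomless_rearrangement_partition:
  fixes X :: "'a \<Rightarrow> real"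
  assumes P: "prob_space M" and atl: "atomless M" and Z: "Z \<in> densities M"
    and A: "\<And>j. A j \<in> sets M" "disjoint_family A" and X: "X \<in> borel_measurable M"
  obtains X' where "X' \<in> borel_measurable M" and "distr M borel X' = distr M borel X"
    and "\<And>g. g \<in> borel_measurable borel \<Longrightarrow> (\<And>x. 0 \<le> g x) \<Longrightarrow>
      (\<integral>\<^sup>+\<omega>. ennreal (Z \<omega> * g (X' \<omega>)) \<partial>M) = (\<integral>\<^sup>+\<omega>. ennreal (partition_average M Z A \<omega> * g (X \<omega>)) \<partial>M)"
proof -
  interpret prob_space M by fact
  define Q where "Q = density M (\<lambda>\<omega>. ennreal (Z \<omega>))"
  have Zm: "Z \<in> borel_measurable M" using Z by (simp add: densities_def)
  have Q: "finite_measure Q" "sets Q = sets M" "\<And>S. S \<in> sets M \<Longrightarrow> measure M S = 0 \<Longrightarrow> measure Q S = 0"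
    unfolding Q_def using finite_measure_density_densities[OF Z] measure_density_densities_null[OF Z]
    by auto
  define c where "c j = (\<integral>\<omega>. Z \<omega> * indicator (A j) \<omega> \<partial>M) / measure M (A j)" for j
  have c_eq: "measure Q (A j) / measure M (A j) = c j" for j
    using measure_density_densities[OF Z A(1)] by (simp add: Q_def c_def)
  have c_nonneg: "0 \<le> c j" for j unfolding c_eq[symmetric] by simp
  have average_cell: "partition_average M Z A \<omega> = c j" if "\<omega> \<in> A j" for \<omega> j
    using that by (simp add: partition_average_def paste_in[OF A(2)] c_def)
  show ?thesis
  proof (rule atomless_rearrangement_cells[where A = A, OF P atl Q A(1) X])
    fix Y assume Y: "\<And>j. Y j \<in> borel_measurable M"
      and Y_M: "\<And>j f. f \<in> borel_measurable borel \<Longrightarrow>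
        (\<integral>\<^sup>+\<omega>. f (Y j \<omega>) * indicator (A j) \<omega> \<partial>M) = (\<integral>\<^sup>+\<omega>. f (X \<omega>) * indicator (A j) \<omega> \<partial>M)"
      and Y_Q: "\<And>j f. f \<in> borel_measurable borel \<Longrightarrow>
        (\<integral>\<^sup>+\<omega>. f (Y j \<omega>) * indicator (A j) \<omega> \<partial>Q)
          = ennreal (measure Q (A j) / measure M (A j)) * (\<integral>\<^sup>+\<omega>. f (X \<omega>) * indicator (A j) \<omega> \<partial>M)"
    have X': "paste A Y X \<in> borel_measurable M" using A Y X by (rule measurable_paste)
    show ?thesis
    proof (rule that[OF X' distr_paste_eq[OF A Y X Y_M[OF borel_measurable_indicator]]])
      fix g :: "real \<Rightarrow> real" assume g: "g \<in> borel_measurable borel" and g_nonneg: "\<And>x. 0 \<le> g x"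
      show "(\<integral>\<^sup>+\<omega>. ennreal (Z \<omega> * g (paste A Y X \<omega>)) \<partial>M)
        = (\<integral>\<^sup>+\<omega>. ennreal (partition_average M Z A \<omega> * g (X \<omega>)) \<partial>M)"
      proof (rule nn_integral_eq_on_partition[OF _ _ A])
        show "(\<lambda>\<omega>. ennreal (Z \<omega> * g (paste A Y X \<omega>))) \<in> borel_measurable M" using Zm X' g by measurable
        show "(\<lambda>\<omega>. ennreal (partition_average M Z A \<omega> * g (X \<omega>))) \<in> borel_measurable M"
          using borel_measurable_partition_average[OF Zm A] X g by measurable
        show "(\<integral>\<^sup>+\<omega>. ennreal (Z \<omega> * g (paste A Y X \<omega>)) * indicator (A j) \<omega> \<partial>M)
            = (\<integral>\<^sup>+\<omega>. ennreal (partition_average M Z A \<omega> * g (X \<omega>)) * indicator (A j) \<omega> \<partial>M)" for j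
        proof -
          have "(\<integral>\<^sup>+\<omega>. ennreal (Z \<omega> * g (paste A Y X \<omega>)) * indicator (A j) \<omega> \<partial>M)
              = (\<integral>\<^sup>+\<omega>. ennreal (Z \<omega>) * (ennreal (g (Y j \<omega>)) * indicator (A j) \<omega>) \<partial>M)"
            using g_nonneg by (intro nn_integral_cong) (simp add: ennreal_mult'' paste_in[OF A(2)] indicator_def)
          also have "\<dots> = (\<integral>\<^sup>+\<omega>. ennreal (g (Y j \<omega>)) * indicator (A j) \<omega> \<partial>Q)"
            unfolding Q_def using Zm g Y A by (intro nn_integral_density[symmetric]) auto
          also have "\<dots> = ennreal (c j) * (\<integral>\<^sup>+\<omega>. ennreal (g (X \<omega>)) * indicator (A j) \<omega> \<partial>M)"
            using g Y_Q[of "\<lambda>x. ennreal (g x)" j] by (simp add: c_eq)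
          also have "\<dots> = (\<integral>\<^sup>+\<omega>. ennreal (c j) * (ennreal (g (X \<omega>)) * indicator (A j) \<omega>) \<partial>M)"
            using g X A by (intro nn_integral_cmult[symmetric]) auto
          also have "\<dots> = (\<integral>\<^sup>+\<omega>. ennreal (partition_average M Z A \<omega> * g (X \<omega>)) * indicator (A j) \<omega> \<partial>M)"
            using c_nonneg g_nonneg by (intro nn_integral_cong)
              (simp add: average_cell ennreal_mult indicator_def)
          finally show ?thesis .
        qed
        show "ennreal (Z \<omega> * g (paste A Y X \<omega>)) = ennreal (partition_average M Z A \<omega> * g (X \<omega>))"
          if "\<omega> \<notin> (\<Union>j. A j)" for \<omega>
          using that by (simp add: partition_average_def paste_out)
      qed
    qed
  qed
qed

section \<open>The determining set is closed under conditional expectation\<close>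

lemma EQ_cong_AE:
  assumes "AE \<omega> in M. Q1 \<omega> = Q2 \<omega>"
  shows "EQ M Q1 X = EQ M Q2 X"
proof -
  have "(\<integral>\<^sup>+\<omega>. ennreal (Q1 \<omega> * max (X \<omega>) 0) \<partial>M) = (\<integral>\<^sup>+\<omega>. ennreal (Q2 \<omega> * max (X \<omega>) 0) \<partial>M)"
    using assms by (intro nn_integral_cong_AE) (auto elim!: eventually_mono)
  moreover have "(\<integral>\<^sup>+\<omega>. ennreal (Q1 \<omega> * max (- X \<omega>) 0) \<partial>M) = (\<integral>\<^sup>+\<omega>. ennreal (Q2 \<omega> * max (- X \<omega>) 0) \<partial>M)"
    using assms by (intro nn_integral_cong_AE) (auto elim!: eventually_mono)
  ultimately show ?thesis unfolding EQ_def Let_def by simp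
qed

lemma utility_le_EQ_partition_average:
  assumes "prob_space M" and "atomless M" and li: "law_invariant M u" and Z: "Z \<in> determining_set M u"
    and A: "\<And>j. A j \<in> sets M" "disjoint_family A" and X: "X \<in> borel_measurable M"
  shows "u X \<le> EQ M (partition_average M Z A) X"
proof -
  have Z_density: "Z \<in> densities M" and u_le: "\<And>X. X \<in> borel_measurable M \<Longrightarrow> u X \<le> EQ M Z X"
    using Z by (auto simp: determining_set_def)
  obtain X' where X': "X' \<in> borel_measurable M" "distr M borel X' = distr M borel X"
    and integrals: "\<And>g. g \<in> borel_measurable borel \<Longrightarrow> (\<And>x. 0 \<le> g x) \<Longrightarrow>
      (\<integral>\<^sup>+\<omega>. ennreal (Z \<omega> * g (X' \<omega>)) \<partial>M) = (\<integral>\<^sup>+\<omega>. ennreal (partition_average M Z A \<omega> * g (X \<omega>)) \<partial>M)"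
    using atomless_rearrangement_partition[OF assms(1,2) Z_density A X] by metis
  have "u X = u X'" using li X X' unfolding law_invariant_def by metis
  also have "\<dots> \<le> EQ M Z X'" by (rule u_le[OF X'(1)])
  also have "EQ M Z X' = EQ M (partition_average M Z A) X"
  proof -
    have "(\<lambda>x::real. max x 0) \<in> borel_measurable borel" "(\<lambda>x::real. max (- x) 0) \<in> borel_measurable borel"
      by measurable
    from integrals[OF this(1)] integrals[OF this(2)] show ?thesis
      unfolding EQ_def Let_def by simp
  qed
  finally show ?thesis .
qed

lemma nn_integral_mult_le_of_AE_le:
  fixes W Z f :: "'a \<Rightarrow> real"
  assumes "AE \<omega> in M. W \<omega> \<le> b * Z \<omega>" and "0 \<le> b" and "\<And>\<omega>. 0 \<le> f \<omega>"
    and "Z \<in> borel_measurable M" and "f \<in> borel_measurable M"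
  shows "(\<integral>\<^sup>+\<omega>. ennreal (W \<omega> * f \<omega>) \<partial>M) \<le> ennreal b * (\<integral>\<^sup>+\<omega>. ennreal (Z \<omega> * f \<omega>) \<partial>M)"
proof -
  have "(\<integral>\<^sup>+\<omega>. ennreal (W \<omega> * f \<omega>) \<partial>M) \<le> (\<integral>\<^sup>+\<omega>. ennreal b * ennreal (Z \<omega> * f \<omega>) \<partial>M)"
    using assms(1)
  proof (intro nn_integral_mono_AE, eventually_elim)
    case (elim \<omega>)
    have "W \<omega> * f \<omega> \<le> b * (Z \<omega> * f \<omega>)"
      using elim assms(3)[of \<omega>] by (simp add: mult_right_mono mult.assoc[symmetric])
    then show ?case using assms(2) by (simp add: ennreal_mult'[symmetric] ennreal_leI)
  qed
  also have "\<dots> = ennreal b * (\<integral>\<^sup>+\<omega>. ennreal (Z \<omega> * f \<omega>) \<partial>M)"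
    using assms(4,5) by (intro nn_integral_cmult) auto
  finally show ?thesis .
qed

lemma EQ_le_of_ratio:
  fixes W Z X :: "'a \<Rightarrow> real"
  assumes ratio: "AE \<omega> in M. W \<omega> \<le> b * Z \<omega> \<and> Z \<omega> \<le> b * W \<omega>" and b: "1 \<le> b"
    and W: "W \<in> borel_measurable M" and Z: "Z \<in> borel_measurable M" and X: "X \<in> borel_measurable M"
    and p: "(\<integral>\<^sup>+\<omega>. ennreal (W \<omega> * max (X \<omega>) 0) \<partial>M) = ennreal p" "0 \<le> p"
    and n: "(\<integral>\<^sup>+\<omega>. ennreal (W \<omega> * max (- X \<omega>) 0) \<partial>M) = ennreal n" "0 \<le> n"
  shows "EQ M Z X \<le> ereal (b * p - n / b)"
proof -
  have Z_le: "AE \<omega> in M. Z \<omega> \<le> b * W \<omega>" and W_le: "AE \<omega> in M. W \<omega> \<le> b * Z \<omega>"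
    using ratio by (auto elim: eventually_mono)
  have parts: "(\<lambda>\<omega>. max (X \<omega>) 0) \<in> borel_measurable M" "(\<lambda>\<omega>. max (- X \<omega>) 0) \<in> borel_measurable M"
    using X by measurable
  have "(\<integral>\<^sup>+\<omega>. ennreal (Z \<omega> * max (X \<omega>) 0) \<partial>M) \<le> ennreal (b * p)"
    using nn_integral_mult_le_of_AE_le[OF Z_le _ _ W parts(1)] b p by (simp add: ennreal_mult)
  moreover obtain pz where pz: "(\<integral>\<^sup>+\<omega>. ennreal (Z \<omega> * max (X \<omega>) 0) \<partial>M) = ennreal pz" "0 \<le> pz"
    using calculation by (cases "\<integral>\<^sup>+\<omega>. ennreal (Z \<omega> * max (X \<omega>) 0) \<partial>M") (auto simp: top_unique)
  ultimately have pz_le: "pz \<le> b * p" using b p(2) by simp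
  have n_le: "ennreal n \<le> ennreal b * (\<integral>\<^sup>+\<omega>. ennreal (Z \<omega> * max (- X \<omega>) 0) \<partial>M)"
    using nn_integral_mult_le_of_AE_le[OF W_le _ _ Z parts(2)] b n by simp
  show ?thesis
  proof (cases "(\<integral>\<^sup>+\<omega>. ennreal (Z \<omega> * max (- X \<omega>) 0) \<partial>M) = \<top>")
    case True
    then show ?thesis by (simp add: EQ_def)
  next
    case False
    then obtain nz where nz: "(\<integral>\<^sup>+\<omega>. ennreal (Z \<omega> * max (- X \<omega>) 0) \<partial>M) = ennreal nz" "0 \<le> nz"
      by (cases "\<integral>\<^sup>+\<omega>. ennreal (Z \<omega> * max (- X \<omega>) 0) \<partial>M") auto
    then have "n \<le> b * nz" using n_le b n(2) by (simp add: ennreal_mult[symmetric])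
    then have "n / b \<le> nz" using b by (simp add: divide_le_eq mult.commute)
    then show ?thesis using pz pz_le nz by (simp add: EQ_def)
  qed
qed

lemma EQ_ge_of_ratio_bounds:
  fixes W X :: "'a \<Rightarrow> real" and Zk :: "nat \<Rightarrow> 'a \<Rightarrow> real"
  assumes W: "W \<in> borel_measurable M" and Zk: "\<And>k. Zk k \<in> borel_measurable M" and X: "X \<in> borel_measurable M"
    and b: "b \<longlonglongrightarrow> 1" "\<And>k. 1 \<le> b k"
    and ratio: "\<And>k. AE \<omega> in M. W \<omega> \<le> b k * Zk k \<omega> \<and> Zk k \<omega> \<le> b k * W \<omega>"
    and le: "\<And>k. v \<le> EQ M (Zk k) X"
  shows "v \<le> EQ M W X"
proof -
  define pos where "pos Z = (\<integral>\<^sup>+\<omega>. ennreal (Z \<omega> * max (X \<omega>) 0) \<partial>M)" for Z :: "'a \<Rightarrow> real"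
  define neg where "neg Z = (\<integral>\<^sup>+\<omega>. ennreal (Z \<omega> * max (- X \<omega>) 0) \<partial>M)" for Z :: "'a \<Rightarrow> real"
  have EQ: "EQ M Z X = (if neg Z = \<top> then - \<infinity> else enn2ereal (pos Z) - enn2ereal (neg Z))" for Z
    unfolding EQ_def Let_def pos_def neg_def by simp
  show ?thesis
  proof (cases "neg W = \<top>")
    case True
    have "(\<lambda>\<omega>. max (- X \<omega>) 0) \<in> borel_measurable M" using X by measurable
    then have "neg W \<le> ennreal (b 0) * neg (Zk 0)"
      unfolding neg_def using ratio[of 0] b(2)[of 0]
      by (intro nn_integral_mult_le_of_AE_le Zk) (auto elim: eventually_mono)
    then have "neg (Zk 0) = \<top>" using True by (auto simp: ennreal_mult_eq_top_iff top_unique)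
    then show ?thesis using le[of 0] by (simp add: EQ)
  next
    case False
    then obtain n where n: "neg W = ennreal n" "0 \<le> n" by (cases "neg W") auto
    show ?thesis
    proof (cases "pos W = \<top>")
      case True
      then show ?thesis using n by (simp add: EQ)
    next
      case False
      then obtain p where p: "pos W = ennreal p" "0 \<le> p" by (cases "pos W") auto
      have "v \<le> ereal (b k * p - n / b k)" for k
        using order_trans[OF le[of k] EQ_le_of_ratio[OF ratio[of k] b(2) W Zk X]] p n
        unfolding pos_def neg_def by blast
      moreover have "(\<lambda>k. b k * p - n / b k) \<longlonglongrightarrow> 1 * p - n / 1"
        using b(1) by (intro tendsto_intros) auto
      ultimately have "v \<le> ereal (p - n)"
        by (intro LIMSEQ_le_const[OF tendsto_ereal]) auto
      then show ?thesis using p n by (simp add: EQ)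
    qed
  qed
qed

text \<open>Band \<open>0\<close> is \<open>W \<le> 0\<close>; since \<open>int_decode\<close> enumerates \<open>\<int>\<close>, the bands \<open>Suc i\<close> are the sets
  \<open>b ^ m \<le> W < b ^ (m + 1)\<close>, \<open>m \<in> \<int>\<close>.\<close>

definition log_band :: "'a set \<Rightarrow> real \<Rightarrow> ('a \<Rightarrow> real) \<Rightarrow> nat \<Rightarrow> 'a set" where
  "log_band \<Omega> b W j = (case j of
      0 \<Rightarrow> {\<omega>\<in>\<Omega>. W \<omega> \<le> 0}
    | Suc i \<Rightarrow> {\<omega>\<in>\<Omega>. 0 < W \<omega> \<and> \<lfloor>log b (W \<omega>)\<rfloor> = int_decode i})"

lemma log_band_sets: "W \<in> borel_measurable M \<Longrightarrow> log_band (space M) b W j \<in> sets M"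
  by (cases j) (simp_all add: log_band_def)

lemma disjoint_family_log_band: "disjoint_family (log_band \<Omega> b W)"
  unfolding disjoint_family_on_def
proof (intro ballI impI)
  fix i j :: nat assume "i \<noteq> j"
  then show "log_band \<Omega> b W i \<inter> log_band \<Omega> b W j = {}"
    using inj_int_decode[of UNIV] by (cases i; cases j) (auto simp: log_band_def inj_eq)
qed

lemma log_band_cover: "\<omega> \<in> \<Omega> \<Longrightarrow> \<exists>j. \<omega> \<in> log_band \<Omega> b W j"
  by (cases "W \<omega> \<le> 0")
    (auto simp: log_band_def intro: exI[of _ 0] exI[of _ "Suc (int_encode \<lfloor>log b (W \<omega>)\<rfloor>)"])

lemma log_band_bounds:
  assumes "1 < b" and "\<omega> \<in> log_band \<Omega> b W (Suc i)"
  shows "b powr int_decode i \<le> W \<omega>" and "W \<omega> < b * b powr int_decode i"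
proof -
  have W: "0 < W \<omega>" "\<lfloor>log b (W \<omega>)\<rfloor> = int_decode i" using assms(2) by (auto simp: log_band_def)
  then have "int_decode i \<le> log b (W \<omega>)" "log b (W \<omega>) < int_decode i + 1" by linarith+
  then have "b powr int_decode i \<le> b powr log b (W \<omega>)" "b powr log b (W \<omega>) < b powr (int_decode i + 1)"
    using assms(1) by (auto intro: powr_mono powr_less_mono)
  then show "b powr int_decode i \<le> W \<omega>" "W \<omega> < b * b powr int_decode i"
    using W(1) assms(1) by (simp_all add: powr_add mult.commute)
qed

lemma average_between:
  fixes W :: "'a \<Rightarrow> real"
  assumes "finite_measure M" and A: "A \<in> sets M" and W: "integrable M W"
    and bounds: "\<And>\<omega>. \<omega> \<in> A \<Longrightarrow> l \<le> W \<omega> \<and> W \<omega> \<le> h" and pos: "0 < measure M A"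
  shows "l \<le> (\<integral>\<omega>. W \<omega> * indicator A \<omega> \<partial>M) / measure M A"
    and "(\<integral>\<omega>. W \<omega> * indicator A \<omega> \<partial>M) / measure M A \<le> h"
proof -
  interpret finite_measure M by fact
  have int: "integrable M (\<lambda>\<omega>. c * indicator A \<omega>)" for c :: real
    using A by (intro integrable_mult_right) (simp add: integrable_indicator_iff less_top[symmetric])
  have "(\<integral>\<omega>. l * indicator A \<omega> \<partial>M) \<le> (\<integral>\<omega>. W \<omega> * indicator A \<omega> \<partial>M)"
    by (rule integral_mono[OF int integrable_real_mult_indicator[OF A W]]) (auto simp: indicator_def dest: bounds)
  moreover have "(\<integral>\<omega>. W \<omega> * indicator A \<omega> \<partial>M) \<le> (\<integral>\<omega>. h * indicator A \<omega> \<partial>M)"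
    by (rule integral_mono[OF integrable_real_mult_indicator[OF A W] int]) (auto simp: indicator_def dest: bounds)
  ultimately
  show "l \<le> (\<integral>\<omega>. W \<omega> * indicator A \<omega> \<partial>M) / measure M A"
    and "(\<integral>\<omega>. W \<omega> * indicator A \<omega> \<partial>M) / measure M A \<le> h"
    using A pos by (simp_all add: field_simps)
qed

lemma AE_notin_null_cells:
  fixes A :: "nat \<Rightarrow> 'a set"
  assumes "finite_measure M" and "\<And>j. A j \<in> sets M"
  shows "AE \<omega> in M. \<forall>j. measure M (A j) = 0 \<longrightarrow> \<omega> \<notin> A j"
proof (subst AE_all_countable, intro allI)
  fix j
  show "AE \<omega> in M. measure M (A j) = 0 \<longrightarrow> \<omega> \<notin> A j"
  proof (cases "measure M (A j) = 0")
    case True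
    then have "A j \<in> null_sets M" using assms by (simp add: null_sets_def finite_measure.emeasure_eq_measure)
    from AE_not_in[OF this] show ?thesis by (auto elim!: eventually_mono)
  qed simp
qed

lemma AE_partition_average_log_band:
  fixes W Z :: "'a \<Rightarrow> real"
  assumes "prob_space M" and b: "1 < b"
    and W: "W \<in> borel_measurable M" "integrable M W" "AE \<omega> in M. 0 \<le> W \<omega>"
    and same_integrals: "\<And>j. (\<integral>\<omega>. Z \<omega> * indicator (log_band (space M) b W j) \<omega> \<partial>M)
      = (\<integral>\<omega>. W \<omega> * indicator (log_band (space M) b W j) \<omega> \<partial>M)"
  shows "AE \<omega> in M. W \<omega> \<le> b * partition_average M Z (log_band (space M) b W) \<omega> \<and>
    partition_average M Z (log_band (space M) b W) \<omega> \<le> b * W \<omega>"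
proof -
  interpret prob_space M by fact
  let ?A = "log_band (space M) b W"
  define c where "c j = (\<integral>\<omega>. W \<omega> * indicator (?A j) \<omega> \<partial>M) / measure M (?A j)" for j
  have average: "partition_average M Z ?A \<omega> = c j" if "\<omega> \<in> ?A j" for \<omega> j
    using that by (simp add: partition_average_def paste_in[OF disjoint_family_log_band] same_integrals c_def)
  have "AE \<omega> in M. W \<omega> * indicator (?A 0) \<omega> = 0"
    using W(3) by eventually_elim (auto simp: log_band_def indicator_def)
  then have c_0: "c 0 = 0" by (simp add: c_def integral_eq_zero_AE)
  have c_Suc: "b powr int_decode i \<le> c (Suc i) \<and> c (Suc i) \<le> b * b powr int_decode i"
    if "0 < measure M (?A (Suc i))" for i
  proof -
    have "b powr int_decode i \<le> W \<omega> \<and> W \<omega> \<le> b * b powr int_decode i" if "\<omega> \<in> ?A (Suc i)" for \<omega>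
      using log_band_bounds[OF b that] by simp
    from average_between[OF finite_measure_axioms log_band_sets[OF W(1)] W(2) this that]
    show ?thesis unfolding c_def by simp
  qed
  have "AE \<omega> in M. \<forall>j. measure M (?A j) = 0 \<longrightarrow> \<omega> \<notin> ?A j"
    using log_band_sets[OF W(1)] by (rule AE_notin_null_cells[OF finite_measure_axioms])
  then show ?thesis using W(3) AE_space
  proof eventually_elim
    case (elim \<omega>)
    then obtain j where j: "\<omega> \<in> ?A j" "0 < measure M (?A j)"
      using log_band_cover[of \<omega> "space M" b W] measure_nonneg[of M] by (metis less_eq_real_def)
    show ?case
    proof (cases j)
      case 0
      then have "W \<omega> = 0" using j(1) elim by (simp add: log_band_def)
      moreover have "partition_average M Z ?A \<omega> = 0" using average[OF j(1)] c_0 0 by simp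
      ultimately show ?thesis by simp
    next
      case (Suc i)
      let ?m = "b powr int_decode i"
      have "W \<omega> < b * ?m" "?m \<le> W \<omega>" using log_band_bounds[OF b] j Suc by auto
      moreover have "?m \<le> c j" "c j \<le> b * ?m" using c_Suc j Suc by auto
      moreover have "b * ?m \<le> b * c j" "b * ?m \<le> b * W \<omega>" using calculation b by simp_all
      ultimately show ?thesis using average[OF j(1)] by simp
    qed
  qed
qed

lemma determining_set_ratio_approx:
  assumes P: "prob_space M" and atl: "atomless M" and li: "law_invariant M u"
    and Z: "Z \<in> determining_set M u" and F: "subalgebra M F"
    and W: "W \<in> borel_measurable F" "integrable M W" "AE \<omega> in M. 0 \<le> W \<omega>"
    and same_integrals: "\<And>B. B \<in> sets F \<Longrightarrow>
      (\<integral>\<omega>. Z \<omega> * indicator B \<omega> \<partial>M) = (\<integral>\<omega>. W \<omega> * indicator B \<omega> \<partial>M)"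
    and b: "1 < b"
  shows "\<exists>Z'. Z' \<in> borel_measurable M \<and> (\<forall>X\<in>borel_measurable M. u X \<le> EQ M Z' X) \<and>
    (AE \<omega> in M. W \<omega> \<le> b * Z' \<omega> \<and> Z' \<omega> \<le> b * W \<omega>)"
proof -
  have Zm: "Z \<in> borel_measurable M" using Z by (simp add: determining_set_def densities_def)
  have WM: "W \<in> borel_measurable M" using measurable_from_subalg[OF F W(1)] .
  let ?A = "log_band (space M) b W"
  have "space F = space M" using F by (simp add: subalgebra_def)
  then have A_F: "?A j \<in> sets F" for j using log_band_sets[OF W(1), of b j] by simp
  then have A: "?A j \<in> sets M" for j using F by (auto simp: subalgebra_def)
  show ?thesis
  proof (intro exI conjI ballI)
    show "partition_average M Z ?A \<in> borel_measurable M"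
      using Zm A disjoint_family_log_band by (rule borel_measurable_partition_average)
    show "u X \<le> EQ M (partition_average M Z ?A) X" if "X \<in> borel_measurable M" for X
      by (rule utility_le_EQ_partition_average[OF P atl li Z A disjoint_family_log_band that])
    show "AE \<omega> in M. W \<omega> \<le> b * partition_average M Z ?A \<omega> \<and> partition_average M Z ?A \<omega> \<le> b * W \<omega>"
      by (rule AE_partition_average_log_band[OF P b WM W(2,3) same_integrals[OF A_F]])
  qed
qed

lemma real_cond_exp_in_determining_set:
  assumes P: "prob_space M" and atl: "atomless M" and li: "law_invariant M u"
    and Z: "Z \<in> determining_set M u" and F: "subalgebra M F"
  shows "real_cond_exp M F Z \<in> determining_set M u"
proof -
  interpret prob_space M by fact
  interpret F: finite_measure_subalgebra M F by unfold_locales (rule F)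
  define W where "W = real_cond_exp M F Z"
  have Zm: "Z \<in> borel_measurable M" and Zpos: "AE \<omega> in M. 0 \<le> Z \<omega>" and Zint: "integrable M Z"
    and Z1: "integral\<^sup>L M Z = 1"
    using Z by (auto simp: determining_set_def densities_def)
  have WF: "W \<in> borel_measurable F" by (simp add: W_def)
  then have WM: "W \<in> borel_measurable M" using measurable_from_subalg[OF F] by blast
  have W_density: "W \<in> densities M"
    unfolding densities_def W_def using F.real_cond_exp_pos[OF Zpos Zm] F.real_cond_exp_int[OF Zint] Z1
    by auto
  then have Wint: "integrable M W" and Wpos: "AE \<omega> in M. 0 \<le> W \<omega>" by (auto simp: densities_def)
  have same_integrals: "(\<integral>\<omega>. Z \<omega> * indicator B \<omega> \<partial>M) = (\<integral>\<omega>. W \<omega> * indicator B \<omega> \<partial>M)"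
    if "B \<in> sets F" for B
    using F.real_cond_exp_intA[OF Zint that] unfolding W_def set_lebesgue_integral_def
    by (simp add: mult.commute)
  have "1 < 1 + 1 / real (Suc k)" for k by simp
  then have "\<forall>k. \<exists>Z'. Z' \<in> borel_measurable M \<and> (\<forall>X\<in>borel_measurable M. u X \<le> EQ M Z' X) \<and>
      (AE \<omega> in M. W \<omega> \<le> (1 + 1 / real (Suc k)) * Z' \<omega> \<and> Z' \<omega> \<le> (1 + 1 / real (Suc k)) * W \<omega>)"
    by (intro allI determining_set_ratio_approx[OF P atl li Z F WF Wint Wpos same_integrals])
  from choice[OF this] obtain Zk where Zk: "\<forall>k. Zk k \<in> borel_measurable M \<and>
      (\<forall>X\<in>borel_measurable M. u X \<le> EQ M (Zk k) X) \<and>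
      (AE \<omega> in M. W \<omega> \<le> (1 + 1 / real (Suc k)) * Zk k \<omega> \<and> Zk k \<omega> \<le> (1 + 1 / real (Suc k)) * W \<omega>)"
    by blast
  have "(\<lambda>k. 1 + 1 / real (Suc k)) \<longlonglongrightarrow> 1 + 0"
    by (intro tendsto_add tendsto_const LIMSEQ_Suc[OF lim_const_over_n])
  then have b: "(\<lambda>k. 1 + 1 / real (Suc k)) \<longlonglongrightarrow> 1" by simp
  have "u X \<le> EQ M W X" if X: "X \<in> borel_measurable M" for X
  proof (rule EQ_ge_of_ratio_bounds[OF WM _ X b])
    show "Zk k \<in> borel_measurable M" "1 \<le> 1 + 1 / real (Suc k)" "u X \<le> EQ M (Zk k) X"
      "AE \<omega> in M. W \<omega> \<le> (1 + 1 / real (Suc k)) * Zk k \<omega> \<and> Zk k \<omega> \<le> (1 + 1 / real (Suc k)) * W \<omega>" for k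
      using Zk X by auto
  qed
  then show ?thesis using W_density by (simp add: determining_set_def W_def)
qed

section \<open>Factor utilities\<close>

lemma sets_gen_sigma:
  "Y \<in> borel_measurable M \<Longrightarrow> sets (gen_sigma M Y) = {Y -` A \<inter> space M | A. A \<in> sets borel}"
  unfolding gen_sigma_def by (rule sets_vimage_algebra2) auto

lemma subalgebra_gen_sigma: "Y \<in> borel_measurable M \<Longrightarrow> subalgebra M (gen_sigma M Y)"
  unfolding subalgebra_def by (auto simp: sets_gen_sigma) (simp_all add: gen_sigma_def)

lemma borel_measurable_gen_sigma_pair:
  fixes Y :: "'a \<Rightarrow> 'b::euclidean_space" and Y' :: "'a \<Rightarrow> 'c::euclidean_space"
  assumes Y: "Y \<in> borel_measurable M" and Y': "Y' \<in> borel_measurable M"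
    and f: "f \<in> borel_measurable (gen_sigma M Y)"
  shows "f \<in> borel_measurable (gen_sigma M (\<lambda>\<omega>. (Y \<omega>, Y' \<omega>)))"
proof -
  have "sets (gen_sigma M Y) \<subseteq> sets (gen_sigma M (\<lambda>\<omega>. (Y \<omega>, Y' \<omega>)))"
  proof
    fix S assume "S \<in> sets (gen_sigma M Y)"
    then obtain A where A: "A \<in> sets borel" "S = Y -` A \<inter> space M"
      unfolding sets_gen_sigma[OF Y] by blast
    have "A \<times> UNIV \<in> sets (borel :: ('b \<times> 'c) measure)"
      using A(1) by (simp add: borel_prod[symmetric])
    moreover have "S = (\<lambda>\<omega>. (Y \<omega>, Y' \<omega>)) -` (A \<times> UNIV) \<inter> space M" using A(2) by auto
    moreover have "(\<lambda>\<omega>. (Y \<omega>, Y' \<omega>)) \<in> borel_measurable M" using Y Y' by measurable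
    ultimately show "S \<in> sets (gen_sigma M (\<lambda>\<omega>. (Y \<omega>, Y' \<omega>)))" by (auto simp: sets_gen_sigma)
  qed
  then show ?thesis
    using measurable_mono[of borel borel "gen_sigma M Y" "gen_sigma M (\<lambda>\<omega>. (Y \<omega>, Y' \<omega>))"] f
    by (auto simp: gen_sigma_def)
qed

lemma factor_utility_le_EQ:
  assumes "prob_space M" and Y: "Y \<in> borel_measurable M"
    and W: "W \<in> D" "integrable M W" "W \<in> borel_measurable (gen_sigma M Y)"
  shows "factor_utility M D X Y \<le> EQ M W X"
proof -
  interpret prob_space M by fact
  interpret finite_measure_subalgebra M "gen_sigma M Y" by unfold_locales (rule subalgebra_gen_sigma[OF Y])
  have "factor_utility M D X Y \<le> EQ M (real_cond_exp M (gen_sigma M Y) W) X"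
    unfolding factor_utility_def using W(1) by (intro INF_lower) auto
  also have "\<dots> = EQ M W X"
    by (rule EQ_cong_AE[OF real_cond_exp_F_meas[OF W(2,3)]])
  finally show ?thesis .
qed

theorem theorem3p7:
  fixes M :: "'a measure" and u :: "('a \<Rightarrow> real) \<Rightarrow> ereal"
    and D :: "('a \<Rightarrow> real) set"
    and X :: "'a \<Rightarrow> real" and Y :: "'a \<Rightarrow> 'b::euclidean_space"
    and Y' :: "'a \<Rightarrow> 'c::euclidean_space"
  assumes "prob_space M" and "atomless M"
    and "coherent_utility M u" and "law_invariant M u"
    and "D = determining_set M u"
    and "X \<in> borel_measurable M"
    and "Y \<in> borel_measurable M" and "Y' \<in> borel_measurable M"
  shows "factor_utility M D X (\<lambda>\<omega>. (Y \<omega>, Y' \<omega>)) \<le> factor_utility M D X Y"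
proof -
  note P = assms(1) and atl = assms(2) and li = assms(4) and D = assms(5) and Y = assms(7,8)
  have YY: "(\<lambda>\<omega>. (Y \<omega>, Y' \<omega>)) \<in> borel_measurable M" using Y by measurable
  have "factor_utility M D X (\<lambda>\<omega>. (Y \<omega>, Y' \<omega>)) \<le> EQ M Q X"
    if Q: "Q \<in> (\<lambda>Z. real_cond_exp M (gen_sigma M Y) Z) ` D" for Q
  proof -
    obtain Z where Z: "Z \<in> determining_set M u" and Q_def: "Q = real_cond_exp M (gen_sigma M Y) Z"
      using Q D by blast
    have Q_D: "Q \<in> determining_set M u"
      unfolding Q_def by (rule real_cond_exp_in_determining_set[OF P atl li Z subalgebra_gen_sigma[OF Y(1)]])
    then have "integrable M Q" by (simp add: determining_set_def densities_def)
    moreover have "Q \<in> borel_measurable (gen_sigma M (\<lambda>\<omega>. (Y \<omega>, Y' \<omega>)))"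
      unfolding Q_def by (intro borel_measurable_gen_sigma_pair Y borel_measurable_cond_exp)
    ultimately show ?thesis using Q_D D by (intro factor_utility_le_EQ[OF P YY]) auto
  qed
  then show ?thesis unfolding factor_utility_def[of M D X Y] by (rule INF_greatest)
qed

end
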